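(* Let $p>3$ be a prime, $\mathbf{K}$ a finite field of characteristic $p$, $\mathbb{Q}_q$ the unramified extension of $\mathbb{Q}_p$ with residue field $\mathbf{K}$ and $\mathbb{Z}_q$ its ring of integers. Let $\ell>2$ be a prime different from $p$. Let $\bar E: y^2=x^3+\bar a_4x+\bar a_6$ and $\bar E': y^2=x^3+\bar a'_4x+\bar a'_6$ be elliptic curves over $\mathbb{Q}_q$ with $\bar a_4,\bar a_6,\bar a'_4,\bar a'_6\in\mathbb{Z}_q$, where $\bar E$ lifts an elliptic curve $E/\mathbf{K}$ and $\bar E'$ is related to $\bar E$ by a normalized isogeny of degree $\ell$ whose reduction is a normalized $\ell$-isogeny of $E$ over $\mathbf{K}$, and suppose these four coefficients are known to $p$-adic (absolute) precision $\mu$, i.e. modulo $p^\mu$. Run the algorithm below over $\mathbb{Z}_q$ (with $p$-adic arithmetic) with length parameter $4\ell$, $\alpha=0$, $\beta=1$, $H(z)=\bar a'_6z^6+\bar a'_4z^4+1$ and $G(x)=1/(\bar a_6x^6+\bar a_4x^4+1)$. If $\mu>\mathrm{Loss}(p,\ell)$, then the polynomials $U,V,J,S$ computed by the algorithm have $p$-adic integer coefficients, and the result $S$ has $p$-adic precision at least $\mu-\mathrm{Loss}(p,\ell)$. Algorithm (with length parameter $m=4\ell$): set $d\leftarrow 2$, $U\leftarrow 1/\beta$, $J\leftarrow 1$, $V\leftarrow 1$, $S\leftarrow \alpha+\beta x+\big[(G'(0)+H'(\alpha)\beta^3)/(4\beta)\big]x^2$. While $d<m-1$: $U\leftarrow U(2-S'U)\bmod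 x^d$; $V\leftarrow \big(V+J(H\circ S)(2-VJ)\big)/2\bmod x^d$; $J\leftarrow J(2-VJ)\bmod x^d$; $S\leftarrow S+V\cdot\int\big(G(H\circ S)-S'^2\big)(UJ/2)\,dx\bmod x^{\min(2d+1,m)}$; $d\leftarrow 2d$. Return $S$.
   Context: An isogeny $I(x,y)=\big(N(x)/D(x),\,c\,y\,(N(x)/D(x))'\big)$ with $N,D$ monic of degrees $\ell,\ell-1$ is called normalized when $c=1$. $'$ is the formal derivative, $H\circ S=H(S(x))$, and $\int\sum_i c_ix^i\,dx=\sum_i\frac{c_i}{i+1}x^{i+1}$ (formal antiderivative with zero constant term). For a positive integer $r$, $\mathrm{PDiv}(p,r)=\max\{k\in\mathbb{N}: p^k\mid r\}$. For integers $i\ge1$, $\mathrm{LpLoss}(p,\ell,i)=\max\{\mathrm{PDiv}(p,r): 2^i+1\le r\le\min(2^{i+1},4\ell-1)\}$, and $\mathrm{Loss}(p,\ell)=\sum_{1\le i<\log_2(4\ell-1)}\mathrm{LpLoss}(p,\ell,i)$. *)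

theory Defs
  imports "HOL-Computational_Algebra.Computational_Algebra"
begin

text \<open>A valuation v on a field (only meaningful on nonzero elements).
  pdiv v k x  means  x \<in> p^k Z_q  (x is zero or has valuation at least k).\<close>

definition pdiv :: "('a::field \<Rightarrow> int) \<Rightarrow> int \<Rightarrow> 'a \<Rightarrow> bool" where
  "pdiv v k x \<longleftrightarrow> x = 0 \<or> k \<le> v x"

abbreviation pint :: "('a::field \<Rightarrow> int) \<Rightarrow> 'a \<Rightarrow> bool" where
  "pint v x \<equiv> pdiv v 0 x"

text \<open>The field 'a with valuation v is (isomorphic to) Q_q, the unramified extension of Q_p
  with finite residue field: a complete discretely valued field of characteristic 0
  (type class), in which p is a uniformizer (v p = 1, i.e. unramified over Q_p),
  whose residue field Z_q / p Z_q is finite.\<close>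

definition unram_padic_field :: "nat \<Rightarrow> ('a::field_char_0 \<Rightarrow> int) \<Rightarrow> bool" where
  "unram_padic_field p v \<longleftrightarrow>
     (\<forall>x y. x \<noteq> 0 \<longrightarrow> y \<noteq> 0 \<longrightarrow> v (x * y) = v x + v y) \<and>
     (\<forall>x y. x \<noteq> 0 \<longrightarrow> y \<noteq> 0 \<longrightarrow> x + y \<noteq> 0 \<longrightarrow> min (v x) (v y) \<le> v (x + y)) \<and>
     v (of_nat p) = 1 \<and>
     (\<exists>R. finite R \<and> (\<forall>x. pint v x \<longrightarrow> (\<exists>r\<in>R. pint v r \<and> pdiv v 1 (x - r)))) \<and>
     (\<forall>s :: nat \<Rightarrow> 'a.
        (\<forall>k. \<exists>N. \<forall>m n. N \<le> m \<longrightarrow> N \<le> n \<longrightarrow> pdiv v k (s m - s n)) \<longrightarrow>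
        (\<exists>L. \<forall>k. \<exists>N. \<forall>n. N \<le> n \<longrightarrow> pdiv v k (s n - L)))"

definition pint_poly :: "('a::field \<Rightarrow> int) \<Rightarrow> 'a poly \<Rightarrow> bool" where
  "pint_poly v P \<longleftrightarrow> (\<forall>i. pint v (coeff P i))"

definition pint_fps :: "('a::field \<Rightarrow> int) \<Rightarrow> 'a fps \<Rightarrow> bool" where
  "pint_fps v F \<longleftrightarrow> (\<forall>i. pint v (F $ i))"

definition wcubic :: "'a::field \<Rightarrow> 'a \<Rightarrow> 'a poly" where
  "wcubic a4 a6 = [:a6, a4, 0, 1:]"

definition wdisc :: "'a::field \<Rightarrow> 'a \<Rightarrow> 'a" where
  "wdisc a4 a6 = 4 * a4 ^ 3 + 27 * a6 ^ 2"

text \<open>I(x,y) = (N/D, y (N/D)') maps y^2 = x^3+a4 x+a6 to y^2 = x^3+a4' x+a6', with N,D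
  monic and coprime of degrees l, l-1 (so the isogeny has degree l).  The curve identity
  (x^3+a4x+a6) ((N/D)')^2 = (N/D)^3 + a4' (N/D) + a6' is cleared of denominators.\<close>

definition normalized_isogeny ::
  "'a::field \<Rightarrow> 'a \<Rightarrow> 'a \<Rightarrow> 'a \<Rightarrow> nat \<Rightarrow> 'a poly \<Rightarrow> 'a poly \<Rightarrow> bool" where
  "normalized_isogeny a4 a6 a4' a6' l N D \<longleftrightarrow>
     lead_coeff N = 1 \<and> lead_coeff D = 1 \<and> degree N = l \<and> degree D = l - 1 \<and> coprime N D \<and>
     wcubic a4 a6 * (pderiv N * D - N * pderiv D) ^ 2
       = D * (N ^ 3 + smult a4' (N * D ^ 2) + smult a6' (D ^ 3))"

text \<open>The reduction mod p of integral polynomials N, D is coprime over the residue field: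
  a Bezout relation A N + B D = 1 holds modulo p Z_q.\<close>

definition red_coprime :: "('a::field \<Rightarrow> int) \<Rightarrow> 'a poly \<Rightarrow> 'a poly \<Rightarrow> bool" where
  "red_coprime v N D \<longleftrightarrow>
     (\<exists>A B. pint_poly v A \<and> pint_poly v B \<and>
            (\<forall>i. pdiv v 1 (coeff (A * N + B * D - 1) i)))"

definition PDiv :: "nat \<Rightarrow> nat \<Rightarrow> nat" where
  "PDiv p r = multiplicity p r"

definition LpLoss :: "nat \<Rightarrow> nat \<Rightarrow> nat \<Rightarrow> nat" where
  "LpLoss p l i = Max {PDiv p r | r. 2 ^ i + 1 \<le> r \<and> r \<le> min (2 ^ (i + 1)) (4 * l - 1)}"

text \<open>i ranges over 1 \<le> i < log2(4l-1), i.e. 1 \<le> i and 2^i < 4l-1.\<close>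
definition Loss :: "nat \<Rightarrow> nat \<Rightarrow> nat" where
  "Loss p l = (\<Sum>i\<in>{i. 1 \<le> i \<and> 2 ^ i < 4 * l - 1}. LpLoss p l i)"

definition pcomp_fps :: "'a::field poly \<Rightarrow> 'a fps \<Rightarrow> 'a fps" where
  "pcomp_fps H S = poly (map_poly fps_const H) S"

type_synonym 'a nstate = "nat \<times> 'a fps \<times> 'a fps \<times> 'a fps \<times> 'a fps"
  (* (d, U, V, J, S) *)

definition newton_init :: "'a::field \<Rightarrow> 'a \<Rightarrow> 'a fps \<Rightarrow> 'a poly \<Rightarrow> 'a nstate" where
  "newton_init \<alpha> \<beta> G H =
     (2, fps_const (inverse \<beta>), 1, 1,
      fps_const \<alpha> + fps_const \<beta> * fps_X
        + fps_const ((G $ 1 + poly (pderiv H) \<alpha> * \<beta> ^ 3) / (4 * \<beta>)) * fps_X ^ 2)"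

definition newton_step :: "nat \<Rightarrow> 'a::field_char_0 fps \<Rightarrow> 'a poly \<Rightarrow> 'a nstate \<Rightarrow> 'a nstate" where
  "newton_step m G H st =
     (case st of (d, U, V, J, S) \<Rightarrow>
       let U1 = fps_cutoff d (U * (2 - fps_deriv S * U));
           V1 = fps_cutoff d ((V + J * pcomp_fps H S * (2 - V * J)) * fps_const (1 / 2));
           J1 = fps_cutoff d (J * (2 - V1 * J));
           S1 = fps_cutoff (min (2 * d + 1) m)
                  (S + V1 * fps_integral0
                       ((G * pcomp_fps H S - (fps_deriv S) ^ 2) * (U1 * J1 * fps_const (1 / 2))))
       in (2 * d, U1, V1, J1, S1))"

definition newton_run :: "nat \<Rightarrow> 'a::field_char_0 \<Rightarrow> 'a \<Rightarrow> 'a fps \<Rightarrow> 'a poly \<Rightarrow> nat \<Rightarrow> 'a nstate" where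
  "newton_run m \<alpha> \<beta> G H k = (newton_step m G H ^^ k) (newton_init \<alpha> \<beta> G H)"

text \<open>All states (d,U,V,J,S) produced by the algorithm (initial one and after each pass of
  the while loop "while d < m - 1").\<close>
definition newton_states :: "nat \<Rightarrow> 'a::field_char_0 \<Rightarrow> 'a \<Rightarrow> 'a fps \<Rightarrow> 'a poly \<Rightarrow> 'a nstate set" where
  "newton_states m \<alpha> \<beta> G H =
     {newton_run m \<alpha> \<beta> G H k | k. \<forall>j<k. fst (newton_run m \<alpha> \<beta> G H j) < m - 1}"

definition newton_result :: "nat \<Rightarrow> 'a::field_char_0 \<Rightarrow> 'a \<Rightarrow> 'a fps \<Rightarrow> 'a poly \<Rightarrow> 'a fps" where
  "newton_result m \<alpha> \<beta> G H =
     (let k = (LEAST k. \<not> fst (newton_run m \<alpha> \<beta> G H k) < m - 1)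
      in snd (snd (snd (snd (newton_run m \<alpha> \<beta> G H k)))))"

definition state_pint :: "('a::field \<Rightarrow> int) \<Rightarrow> 'a nstate \<Rightarrow> bool" where
  "state_pint v st = (case st of (d, U, V, J, S) \<Rightarrow>
      pint_fps v U \<and> pint_fps v V \<and> pint_fps v J \<and> pint_fps v S)"

definition Hpol :: "'a::field \<Rightarrow> 'a \<Rightarrow> 'a poly" where
  "Hpol a4' a6' = [:1, 0, 0, 0, a4', 0, a6':]"

definition Gser :: "'a::field \<Rightarrow> 'a \<Rightarrow> 'a fps" where
  "Gser a4 a6 = inverse (fps_const a6 * fps_X ^ 6 + fps_const a4 * fps_X ^ 4 + 1)"

end

theory Submission
  imports Defs
begin

text \<open>The algorithm is Newton iteration for the differential equation \<open>G \<cdot> (H \<circ> S) = S'\<^sup>2\<close>: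
  each pass doubles the \<open>X\<close>-adic precision of \<open>S\<close>, and keeps \<open>U \<approx> 1/S'\<close>,
  \<open>V \<approx> (H \<circ> S)\<^bsup>1/2\<^esup>\<close> and \<open>J \<approx> 1/V\<close> to half that precision. Apart from the antiderivative,
  a pass consists of ring operations on integral power series and a division by 2, a unit as \<open>p\<close>
  is odd; so inputs congruent modulo \<open>p\<^sup>\<mu>\<close> give congruent states, except that the antiderivative
  in the pass from precision \<open>d\<close> to \<open>2d\<close> divides the coefficient of degree \<open>r\<close>,
  \<open>d < r < min (2d+1) m\<close>, by \<open>r\<close>, which costs at most \<open>LpLoss\<close> digits.

  This needs the states of one run to be integral. The equation has the exact solution
  \<open>T(z) = (N/D)(1/z\<^sup>2)\<^bsup>-1/2\<^esup>\<close>, which is integral because \<open>N\<close> and \<open>D\<close> are monic and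
  integral; by uniqueness every computed \<open>S\<close> is a truncation of \<open>T\<close>, and the correction term of
  each pass, being the difference of two integral truncations, is integral too.\<close>

lemma fps_X_power_dvd_iff: "fps_X ^ k dvd (F :: 'a::field fps) \<longleftrightarrow> (\<forall>i<k. F $ i = 0)"
proof (cases "F = 0")
  case False
  have "fps_X ^ k dvd F \<longleftrightarrow> k \<le> subdegree F"
    using fps_dvd_iff[of "fps_X ^ k" F] False by (simp add: fps_X_power_subdegree)
  also have "\<dots> \<longleftrightarrow> (\<forall>i<k. F $ i = 0)"
  proof
    assume "\<forall>i<k. F $ i = 0"
    then show "k \<le> subdegree F"
      using False nth_subdegree_nonzero[of F] by (meson not_le)
  qed (meson nth_less_subdegree_zero order_less_le_trans)
  finally show ?thesis .
qed simp

lemma fps_X_power_dvd_deriv: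
  "fps_X ^ Suc k dvd F \<Longrightarrow> fps_X ^ k dvd fps_deriv (F :: 'a::field_char_0 fps)"
  unfolding fps_X_power_dvd_iff by auto

lemma fps_X_power_dvd_of_deriv:
  fixes F :: "'a::field_char_0 fps"
  assumes "fps_X ^ k dvd fps_deriv F" "F $ 0 = 0"
  shows "fps_X ^ Suc k dvd F"
  unfolding fps_X_power_dvd_iff
proof (intro allI impI)
  fix i assume "i < Suc k"
  then show "F $ i = 0"
  proof (cases i)
    case (Suc j)
    then have "fps_deriv F $ j = 0"
      using assms(1) \<open>i < Suc k\<close> unfolding fps_X_power_dvd_iff by auto
    then show ?thesis using Suc by (simp del: of_nat_Suc)
  qed (use assms(2) in simp)
qed

lemma fps_X_power_dvd_integral0:
  "fps_X ^ k dvd F \<Longrightarrow> fps_X ^ Suc k dvd fps_integral0 (F :: 'a::field_char_0 fps)"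
  unfolding fps_X_power_dvd_iff by (auto simp: fps_integral_def less_Suc_eq_0_disj)

lemma fps_X_power_dvd_cutoff_diff: "fps_X ^ n dvd (fps_cutoff n F - (F :: 'a::field fps))"
  unfolding fps_X_power_dvd_iff by auto

lemma fps_cutoff_mult_cutoff: "fps_cutoff n (F * fps_cutoff n G) = fps_cutoff n (F * G)"
  by (simp add: fps_eq_iff fps_cutoff_right_mult_nth)

lemma fps_X_power_dvd_mult:
  "fps_X ^ a dvd (F :: 'a::field fps) \<Longrightarrow> fps_X ^ b dvd G \<Longrightarrow> fps_X ^ (a + b) dvd F * G"
  by (simp add: mult_dvd_mono power_add)

lemma fps_X_power_dvd_cancel_unit:
  fixes F A :: "'a::field fps"
  assumes "fps_X ^ k dvd A * F" "A $ 0 \<noteq> 0"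
  shows "fps_X ^ k dvd F"
proof -
  have "F = inverse A * (A * F)"
    using assms(2) by (simp add: inverse_mult_eq_1 mult.assoc[symmetric])
  then show ?thesis using assms(1) by (metis dvd_mult)
qed

section \<open>Valuations with odd residue characteristic\<close>

locale padic_valuation =
  fixes p :: nat and v :: "'a::field_char_0 \<Rightarrow> int"
  assumes v_mult: "\<And>x y. x \<noteq> 0 \<Longrightarrow> y \<noteq> 0 \<Longrightarrow> v (x * y) = v x + v y"
    and v_add: "\<And>x y. x \<noteq> 0 \<Longrightarrow> y \<noteq> 0 \<Longrightarrow> x + y \<noteq> 0 \<Longrightarrow> min (v x) (v y) \<le> v (x + y)"
    and v_p: "v (of_nat p) = 1"
    and prime_p: "prime p"
    and odd_p: "odd p"
begin

lemma v_1: "v 1 = 0"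
  using v_mult[of 1 1] by simp

lemma v_inverse: "x \<noteq> 0 \<Longrightarrow> v (inverse x) = - v x"
  using v_mult[of x "inverse x"] v_1 by simp

lemma v_uminus: "x \<noteq> 0 \<Longrightarrow> v (- x) = v x"
  using v_mult[of "-1" x] v_mult[of "-1" "-1"] v_1 by simp

lemma pdiv_0 [simp]: "pdiv v k 0"
  by (simp add: pdiv_def)

lemma pdiv_mono: "pdiv v a x \<Longrightarrow> b \<le> a \<Longrightarrow> pdiv v b x"
  by (auto simp: pdiv_def)

lemma pdiv_add: "pdiv v k x \<Longrightarrow> pdiv v k y \<Longrightarrow> pdiv v k (x + y)"
  unfolding pdiv_def using v_add[of x y] by (cases "x = 0 \<or> y = 0 \<or> x + y = 0") auto

lemma pdiv_uminus_iff [simp]: "pdiv v k (- x) \<longleftrightarrow> pdiv v k x"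
  unfolding pdiv_def by (cases "x = 0") (auto simp: v_uminus)

lemma pdiv_diff: "pdiv v k x \<Longrightarrow> pdiv v k y \<Longrightarrow> pdiv v k (x - y)"
  using pdiv_add[of k x "- y"] by simp

lemma pdiv_diff_commute: "pdiv v k (x - y) \<longleftrightarrow> pdiv v k (y - x)"
  using pdiv_uminus_iff[of k "x - y"] by simp

lemma pdiv_mult: "pdiv v a x \<Longrightarrow> pdiv v b y \<Longrightarrow> pdiv v (a + b) (x * y)"
  unfolding pdiv_def by (cases "x = 0"; cases "y = 0") (auto simp: v_mult)

lemma pint_mult: "pint v x \<Longrightarrow> pint v y \<Longrightarrow> pint v (x * y)"
  using pdiv_mult[of 0 x 0 y] by simp

lemma pdiv_sum: "(\<And>i. i \<in> A \<Longrightarrow> pdiv v k (f i)) \<Longrightarrow> pdiv v k (\<Sum>i\<in>A. f i)"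
  by (induction A rule: infinite_finite_induct) (auto intro: pdiv_add)

lemma pint_1: "pint v 1"
  by (simp add: pdiv_def v_1)

lemma pint_of_nat: "pint v (of_nat n)"
  by (induction n) (auto intro: pdiv_add pint_1)

lemma pint_of_int: "pint v (of_int z)"
  using pint_of_nat[of "nat \<bar>z\<bar>"] by (cases "z \<ge> 0") simp_all

lemma v_of_nat_coprime:
  assumes "\<not> p dvd u"
  shows "v (of_nat u) = 0"
proof -
  have "u \<noteq> 0" using assms by (metis dvd_0_right)
  then have "v (of_nat u) \<ge> 0" using pint_of_nat[of u] by (simp add: pdiv_def)
  moreover have "\<not> pdiv v 1 (of_nat u)"
  proof
    assume u: "pdiv v 1 (of_nat u)"
    have "coprime (int u) (int p)"
      using prime_p assms by (simp add: prime_imp_coprime coprime_commute)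
    then obtain a b :: int where "a * int u + b * int p = 1"
      by (metis bezout_int coprime_iff_gcd_eq_1)
    then have "of_int (a * int u + b * int p) = (1::'a)"
      by simp
    then have "of_int a * of_nat u + of_int b * of_nat p = (1::'a)"
      by (simp only: of_int_add of_int_mult of_int_of_nat_eq)
    moreover have "pdiv v 1 (of_nat p :: 'a)"
      by (simp add: pdiv_def v_p)
    then have "pdiv v 1 (of_int a * of_nat u + of_int b * of_nat p :: 'a)"
      using pdiv_add[OF pdiv_mult[OF pint_of_int[of a] u] pdiv_mult[OF pint_of_int[of b]]] by simp
    ultimately have "pdiv v 1 (1::'a)" by simp
    then show False by (simp add: pdiv_def v_1)
  qed
  ultimately show ?thesis by (simp add: pdiv_def)
qed

lemma v_of_nat: "n \<noteq> 0 \<Longrightarrow> v (of_nat n) = int (multiplicity p n)"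
proof -
  assume "n \<noteq> 0"
  moreover have "\<not> is_unit p" using prime_p by auto
  ultimately obtain y where y: "n = p ^ multiplicity p n * y" "\<not> p dvd y"
    using multiplicity_decompose' by blast
  have p0: "(of_nat p :: 'a) \<noteq> 0" using prime_p by auto
  have y0: "(of_nat y :: 'a) \<noteq> 0" using y(2) by (metis dvd_0_right of_nat_eq_0_iff)
  have v_p_power: "v ((of_nat p :: 'a) ^ k) = int k" for k
  proof (induction k)
    case (Suc k)
    then show ?case using v_mult[of "of_nat p" "(of_nat p :: 'a) ^ k"] p0 v_p by simp
  qed (simp add: v_1)
  have "v (of_nat n :: 'a) = v ((of_nat p :: 'a) ^ multiplicity p n * of_nat y)"
    by (subst y(1)) simp
  also have "\<dots> = int (multiplicity p n)"
    using v_mult p0 y0 v_p_power v_of_nat_coprime[OF y(2)] by simp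
  finally show ?thesis .
qed

lemma pint_half: "pint v (1 / 2 :: 'a)"
proof -
  have "\<not> p dvd 2"
    using odd_p primes_dvd_imp_eq[OF prime_p two_is_prime_nat] by auto
  then have "v (2 :: 'a) = 0"
    using v_of_nat_coprime[of 2] by simp
  then show ?thesis
    using v_inverse[of "2::'a"] by (simp add: pdiv_def inverse_eq_divide)
qed

lemma pdiv_divide_of_nat:
  assumes "pdiv v e x" "n \<noteq> 0" "int (multiplicity p n) \<le> L"
  shows "pdiv v (e - L) (x / of_nat n)"
proof (cases "x = 0")
  case False
  have "v (x / of_nat n) = v x - v (of_nat n)"
    using v_mult[of x "inverse (of_nat n)"] v_inverse[of "of_nat n"] False assms(2)
    by (simp add: divide_inverse)
  then show ?thesis using assms False v_of_nat[OF assms(2)] by (simp add: pdiv_def)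
qed simp

end

definition fps_pdiv :: "('a::field \<Rightarrow> int) \<Rightarrow> int \<Rightarrow> 'a fps \<Rightarrow> bool" where
  "fps_pdiv v e F \<longleftrightarrow> (\<forall>i. pdiv v e (F $ i))"

lemma pint_fps_iff_fps_pdiv: "pint_fps v F \<longleftrightarrow> fps_pdiv v 0 F"
  by (simp add: pint_fps_def fps_pdiv_def)

context padic_valuation
begin

lemma fps_pdiv_0 [simp]: "fps_pdiv v e 0"
  by (simp add: fps_pdiv_def)

lemma fps_pdiv_add: "fps_pdiv v e F \<Longrightarrow> fps_pdiv v e G \<Longrightarrow> fps_pdiv v e (F + G)"
  by (simp add: fps_pdiv_def pdiv_add)

lemma fps_pdiv_diff: "fps_pdiv v e F \<Longrightarrow> fps_pdiv v e G \<Longrightarrow> fps_pdiv v e (F - G)"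
  by (simp add: fps_pdiv_def pdiv_diff)

lemma fps_pdiv_diff_commute: "fps_pdiv v e (F - G) \<longleftrightarrow> fps_pdiv v e (G - F)"
  by (simp add: fps_pdiv_def pdiv_diff_commute)

lemma fps_pdiv_mono: "fps_pdiv v e F \<Longrightarrow> d \<le> e \<Longrightarrow> fps_pdiv v d F"
  by (meson fps_pdiv_def pdiv_mono)

lemma fps_pdiv_const: "pdiv v e c \<Longrightarrow> fps_pdiv v e (fps_const c)"
  by (simp add: fps_pdiv_def)

lemma fps_pdiv_cutoff: "fps_pdiv v e F \<Longrightarrow> fps_pdiv v e (fps_cutoff n F)"
  by (simp add: fps_pdiv_def)

lemma fps_pdiv_mult:
  assumes "fps_pdiv v a F" "fps_pdiv v b G"
  shows "fps_pdiv v (a + b) (F * G)"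
  unfolding fps_pdiv_def fps_mult_nth
  using assms by (auto simp: fps_pdiv_def intro!: pdiv_sum pdiv_mult)

lemma fps_pdiv_deriv: "fps_pdiv v e F \<Longrightarrow> fps_pdiv v e (fps_deriv F)"
  unfolding fps_pdiv_def using pdiv_mult[OF pint_of_nat] by (simp del: of_nat_Suc)

lemma fps_pdiv_cutoff_integral0:
  assumes "fps_pdiv v e F"
    and "\<And>n. 0 < n \<Longrightarrow> n < N \<Longrightarrow> F $ (n - 1) \<noteq> 0 \<Longrightarrow> int (multiplicity p n) \<le> L"
  shows "fps_pdiv v (e - L) (fps_cutoff N (fps_integral0 F))"
  unfolding fps_pdiv_def
proof
  fix n
  show "pdiv v (e - L) (fps_cutoff N (fps_integral0 F) $ n)"
  proof (cases "n = 0 \<or> N \<le> n \<or> F $ (n - 1) = 0")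
    case False
    then have "pdiv v (e - L) (F $ (n - 1) / of_nat n)"
      using assms pdiv_divide_of_nat by (auto simp: fps_pdiv_def)
    then show ?thesis using False by (auto simp: fps_integral_def divide_inverse mult.commute)
  qed (auto simp: fps_integral_def)
qed

lemma pint_fps_0 [simp]: "pint_fps v 0"
  by (simp add: pint_fps_def)

lemma pint_fps_1: "pint_fps v 1"
  by (simp add: pint_fps_def pint_1)

lemma pint_fps_X: "pint_fps v fps_X"
  by (simp add: pint_fps_def fps_X_def pint_1)

lemma pint_fps_numeral: "pint_fps v (numeral n)"
  using pint_of_nat[of "numeral n"] by (simp add: pint_fps_def numeral_fps_const)

lemma pint_fps_half: "pint_fps v (fps_const (1 / 2))"
  using pint_half by (simp add: pint_fps_def)

lemma pint_fps_mult_pdiv: "pint_fps v F \<Longrightarrow> fps_pdiv v e G \<Longrightarrow> fps_pdiv v e (F * G)"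
  using fps_pdiv_mult[of 0 F e G] by (simp add: pint_fps_iff_fps_pdiv)

lemma pint_fps_mult: "pint_fps v F \<Longrightarrow> pint_fps v G \<Longrightarrow> pint_fps v (F * G)"
  by (simp add: pint_fps_iff_fps_pdiv pint_fps_mult_pdiv)

lemma pint_fps_of_pdiv_diff:
  assumes "pint_fps v F" "fps_pdiv v e (G - F)" "0 \<le> e"
  shows "pint_fps v G"
proof -
  have "fps_pdiv v 0 (F + (G - F))"
    using assms by (intro fps_pdiv_add) (auto simp: pint_fps_iff_fps_pdiv intro: fps_pdiv_mono)
  then show ?thesis by (simp add: pint_fps_iff_fps_pdiv)
qed

lemma pint_fps_of_poly: "pint_poly v P \<Longrightarrow> pint_fps v (fps_of_poly P)"
  by (simp add: pint_fps_def pint_poly_def)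

text \<open>The coefficients of the inverse and of the square root are computed by recursions
  whose only divisions are by the constant term 1 and by 2, a unit as \<open>p\<close> is odd.\<close>

lemma pint_fps_inverse:
  assumes F: "pint_fps v F" and F0: "F $ 0 = 1"
  shows "pint_fps v (inverse F)"
proof -
  have FG: "F * inverse F = 1"
    using F0 by (simp add: inverse_mult_eq_1')
  have "pint v (inverse F $ n)" for n
  proof (induction n rule: less_induct)
    case (less n)
    show ?case
    proof (cases n)
      case (Suc m)
      have "(F * inverse F) $ n = 0"
        using FG Suc by simp
      moreover have "(F * inverse F) $ n
          = F $ 0 * inverse F $ n + (\<Sum>i = Suc 0..n. F $ i * inverse F $ (n - i))"
        by (simp add: fps_mult_nth sum.atLeast_Suc_atMost)
      ultimately have "inverse F $ n + (\<Sum>i = Suc 0..n. F $ i * inverse F $ (n - i)) = 0"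
        using F0 by simp
      then have "inverse F $ n = - (\<Sum>i = Suc 0..n. F $ i * inverse F $ (n - i))"
        by (simp add: eq_neg_iff_add_eq_0)
      moreover have "pint v (\<Sum>i = Suc 0..n. F $ i * inverse F $ (n - i))"
        using F less by (intro pdiv_sum) (auto simp: pint_fps_def intro!: pint_mult)
      ultimately show ?thesis by simp
    qed (use F0 in \<open>simp add: pint_1\<close>)
  qed
  then show ?thesis unfolding pint_fps_def by simp
qed

lemma pint_fps_sqrt:
  assumes RR: "R * R = Y" and Y: "pint_fps v Y" and R0: "R $ 0 = 1"
  shows "pint_fps v R"
proof -
  have "pint v (R $ n)" for n
  proof (induction n rule: less_induct)
    case (less n)
    show ?case
    proof (cases n)
      case (Suc m)
      define C where "C = (\<Sum>i = Suc 0..m. R $ i * R $ (Suc m - i))"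
      have "Y $ n = (\<Sum>i = 0..Suc m. R $ i * R $ (Suc m - i))"
        using RR Suc fps_mult_nth by blast
      also have "\<dots> = R $ 0 * R $ Suc m + (C + R $ Suc m * R $ 0)"
        by (simp add: C_def sum.atLeast0_atMost_Suc sum.atLeast_Suc_atMost)
      finally have eq: "R $ n = (1/2) * (Y $ n - C)"
        using R0 Suc by simp
      have "pint v C"
        using less Suc unfolding C_def by (intro pdiv_sum) (auto intro!: pint_mult)
      then have "pint v (Y $ n - C)"
        using Y by (auto simp: pint_fps_def intro: pdiv_diff)
      then show ?thesis unfolding eq by (rule pint_mult[OF pint_half])
    qed (use R0 in \<open>simp add: pint_1\<close>)
  qed
  then show ?thesis by (simp add: pint_fps_def)
qed

definition fps_cong :: "int \<Rightarrow> 'a fps \<Rightarrow> 'a fps \<Rightarrow> bool" where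
  "fps_cong e A B \<longleftrightarrow> pint_fps v A \<and> pint_fps v B \<and> fps_pdiv v e (A - B)"

lemma fps_cong_refl: "pint_fps v A \<Longrightarrow> fps_cong e A A"
  by (simp add: fps_cong_def)

lemma fps_cong_mono: "fps_cong e A B \<Longrightarrow> d \<le> e \<Longrightarrow> fps_cong d A B"
  by (auto simp: fps_cong_def intro: fps_pdiv_mono)

lemma fps_cong_add:
  assumes "fps_cong e A B" "fps_cong e A' B'"
  shows "fps_cong e (A + A') (B + B')"
proof -
  have "A + A' - (B + B') = (A - B) + (A' - B')"
    by simp
  then show ?thesis
    using assms unfolding fps_cong_def pint_fps_iff_fps_pdiv by (metis fps_pdiv_add)
qed

lemma fps_cong_diff:
  assumes "fps_cong e A B" "fps_cong e A' B'"
  shows "fps_cong e (A - A') (B - B')"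
proof -
  have "A - A' - (B - B') = (A - B) - (A' - B')"
    by simp
  then show ?thesis
    using assms unfolding fps_cong_def pint_fps_iff_fps_pdiv by (metis fps_pdiv_diff)
qed

lemma fps_cong_mult:
  assumes "fps_cong e A B" "fps_cong e A' B'"
  shows "fps_cong e (A * A') (B * B')"
proof -
  have "A * A' - B * B' = B * (A' - B') + (A - B) * A'"
    by (simp add: algebra_simps)
  then have "fps_pdiv v e (A * A' - B * B')"
    using assms unfolding fps_cong_def
    by (metis fps_pdiv_add mult.commute pint_fps_mult_pdiv)
  then show ?thesis
    using assms unfolding fps_cong_def by (simp add: pint_fps_mult)
qed

lemma fps_cong_power: "fps_cong e A B \<Longrightarrow> fps_cong e (A ^ n) (B ^ n)"
  by (induction n) (auto intro: fps_cong_mult fps_cong_refl pint_fps_1)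

lemma fps_cong_cutoff: "fps_cong e A B \<Longrightarrow> fps_cong e (fps_cutoff n A) (fps_cutoff n B)"
  unfolding fps_cong_def pint_fps_iff_fps_pdiv by (simp add: fps_cutoff_diff[symmetric] fps_pdiv_cutoff)

lemma fps_cong_deriv: "fps_cong e A B \<Longrightarrow> fps_cong e (fps_deriv A) (fps_deriv B)"
  unfolding fps_cong_def pint_fps_iff_fps_pdiv using fps_pdiv_deriv[of e "A - B"] by (simp add: fps_pdiv_deriv)

lemma fps_cong_const:
  "pint v a \<Longrightarrow> pint v b \<Longrightarrow> pdiv v e (a - b) \<Longrightarrow> fps_cong e (fps_const a) (fps_const b)"
  by (simp add: fps_cong_def pint_fps_def fps_pdiv_const)

lemma fps_cong_inverse:
  assumes "fps_cong e A B" "A $ 0 = 1" "B $ 0 = 1"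
  shows "fps_cong e (inverse A) (inverse B)"
proof -
  have int: "pint_fps v (inverse A)" "pint_fps v (inverse B)"
    using assms pint_fps_inverse unfolding fps_cong_def by auto
  have "inverse A - inverse B = inverse A * inverse B * (B - A)"
    using assms(2,3) by (simp add: algebra_simps inverse_mult_eq_1 inverse_mult_eq_1')
  moreover have "fps_pdiv v e (B - A)"
    using assms(1) fps_pdiv_diff_commute unfolding fps_cong_def by blast
  ultimately show ?thesis
    using int unfolding fps_cong_def by (simp add: pint_fps_mult pint_fps_mult_pdiv)
qed

end

lemma pcomp_fps_0 [simp]: "pcomp_fps 0 S = 0"
  by (simp add: pcomp_fps_def)

lemma pcomp_fps_pCons: "pcomp_fps (pCons a H) S = fps_const a + S * pcomp_fps H S"
  by (simp add: pcomp_fps_def map_poly_pCons)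

lemma pcomp_fps_add: "pcomp_fps (H + K) S = pcomp_fps H S + pcomp_fps K S"
  by (induction H K rule: poly_induct2) (simp_all add: pcomp_fps_pCons algebra_simps)

lemma pcomp_fps_nth_0: "pcomp_fps H S $ 0 = poly H (S $ 0)"
  by (induction H) (simp_all add: pcomp_fps_pCons)

lemma fps_deriv_pcomp_fps:
  "fps_deriv (pcomp_fps H S) = pcomp_fps (pderiv H) S * fps_deriv (S :: 'a::field_char_0 fps)"
  by (induction H) (simp_all add: pcomp_fps_pCons pderiv_pCons pcomp_fps_add algebra_simps)

lemma pcomp_fps_diff_dvd: "(S - T) dvd (pcomp_fps H S - pcomp_fps H T)"
proof (induction H)
  case (pCons a H)
  have "pcomp_fps (pCons a H) S - pcomp_fps (pCons a H) T
      = (S - T) * pcomp_fps H S + T * (pcomp_fps H S - pcomp_fps H T)"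
    by (simp add: pcomp_fps_pCons algebra_simps)
  then show ?case using pCons.IH by simp
qed simp

lemma pcomp_fps_taylor:
  "\<exists>K. pcomp_fps H (S + E) = pcomp_fps H S + pcomp_fps (pderiv H) S * E + E ^ 2 * K"
proof (induction H)
  case (pCons a H)
  then obtain K where K: "pcomp_fps H (S + E) = pcomp_fps H S + pcomp_fps (pderiv H) S * E + E ^ 2 * K"
    by blast
  have "pcomp_fps (pCons a H) (S + E) = pcomp_fps (pCons a H) S + pcomp_fps (pderiv (pCons a H)) S * E
      + E ^ 2 * (pcomp_fps (pderiv H) S + (S + E) * K)"
    unfolding pcomp_fps_pCons pderiv_pCons pcomp_fps_add K by (simp add: algebra_simps power2_eq_square)
  then show ?case by blast
qed simp

context padic_valuation
begin

lemma pint_poly_pCons_iff: "pint_poly v (pCons a H) \<longleftrightarrow> pint v a \<and> pint_poly v H"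
  unfolding pint_poly_def by (metis coeff_pCons_0 coeff_pCons_Suc not0_implies_Suc)

lemma fps_cong_pcomp_fps:
  assumes "pint_poly v H" "pint_poly v K" "\<And>i. pdiv v e (coeff H i - coeff K i)"
    and "fps_cong e S T"
  shows "fps_cong e (pcomp_fps H S) (pcomp_fps K T)"
  using assms(1-3)
proof (induction H K rule: poly_induct2)
  case 0
  then show ?case by (simp add: fps_cong_refl)
next
  case (pCons a H b K)
  have "pdiv v e (a - b)" "\<And>i. pdiv v e (coeff H i - coeff K i)"
    using pCons.prems(3)[of 0] pCons.prems(3)[of "Suc _"] by simp_all
  then show ?case
    using pCons assms(4) unfolding pcomp_fps_pCons pint_poly_pCons_iff
    by (intro fps_cong_add fps_cong_mult fps_cong_const) auto
qed

end

section \<open>One Newton step\<close>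

lemma newton_inverse_step:
  fixes U A :: "'a::field fps"
  assumes "fps_X ^ h dvd U * A - 1"
  shows "fps_X ^ (2 * h) dvd fps_cutoff (2 * h) (U * (2 - A * U)) * A - 1"
proof -
  define E where "E = fps_cutoff (2 * h) (U * (2 - A * U)) - U * (2 - A * U)"
  have "fps_X ^ (2 * h) dvd E"
    unfolding E_def by (rule fps_X_power_dvd_cutoff_diff)
  moreover have "fps_X ^ (2 * h) dvd (U * A - 1) * (U * A - 1)"
    using fps_X_power_dvd_mult[OF assms assms] by (simp add: mult_2)
  moreover have "fps_cutoff (2 * h) (U * (2 - A * U)) * A - 1 = E * A - (U * A - 1) * (U * A - 1)"
    unfolding E_def by (simp add: algebra_simps)
  ultimately show ?thesis by simp
qed

lemma newton_sqrt_step: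
  fixes V J Y :: "'a::field_char_0 fps"
  assumes Vi: "fps_X ^ h dvd V ^ 2 - Y" and Ji: "fps_X ^ h dvd V * J - 1"
    and V0: "V $ 0 = 1" and h: "0 < h"
  defines "V1 \<equiv> fps_cutoff (2 * h) ((V + J * Y * (2 - V * J)) * fps_const (1 / 2))"
  shows "fps_X ^ (2 * h) dvd V1 ^ 2 - Y" "fps_X ^ h dvd V1 * J - 1" "V1 $ 0 = 1"
proof -
  define c where "c = (fps_const (1 / 2) :: 'a fps)"
  have c2: "2 * c = 1"
    unfolding c_def by (simp add: numeral_fps_const fps_const_mult[symmetric])
  define a where "a = Y - V ^ 2"
  define b where "b = V * J - 1"
  have a: "fps_X ^ h dvd a" and b: "fps_X ^ h dvd b"
    using Vi Ji unfolding a_def b_def by (simp_all add: dvd_diff_commute)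
  have ab: "fps_X ^ (2 * h) dvd a * b" "fps_X ^ (2 * h) dvd a ^ 2" "fps_X ^ (2 * h) dvd b ^ 2"
    using fps_X_power_dvd_mult[OF a b] fps_X_power_dvd_mult[OF a a] fps_X_power_dvd_mult[OF b b]
    by (simp_all add: mult_2 power2_eq_square)
  \<comment> \<open>\<open>V1 = V + J a / 2 + F + E\<close> with quadratically small \<open>F\<close> and truncation error \<open>E\<close>\<close>
  define F where "F = - (V * b ^ 2 + J * a * b) * c"
  define E where "E = V1 - (V + J * Y * (2 - V * J)) * c"
  have E: "fps_X ^ (2 * h) dvd E"
    unfolding E_def V1_def c_def by (rule fps_X_power_dvd_cutoff_diff)
  have F: "fps_X ^ (2 * h) dvd F"
    unfolding F_def using ab by (simp add: mult.assoc)
  have V1: "V1 = V + J * a * c + F + E"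
    using c2 unfolding E_def F_def a_def b_def by algebra
  have "V1 ^ 2 - Y = E * (2 * (V1 - E) + E) + (a * b + J ^ 2 * a ^ 2 * c ^ 2 + F * (2 * V + 2 * J * a * c + F))"
    using c2 unfolding V1 a_def b_def by algebra
  then show "fps_X ^ (2 * h) dvd V1 ^ 2 - Y"
    using E F ab by (simp add: mult.assoc)
  have "V1 * J - 1 = b + J ^ 2 * a * c + (F + E) * J"
    unfolding V1 b_def by (simp add: algebra_simps power2_eq_square)
  moreover have "fps_X ^ h dvd F + E"
    using power_le_dvd[OF E] power_le_dvd[OF F] by simp
  ultimately show "fps_X ^ h dvd V1 * J - 1"
    using a b by simp
  have "b $ 0 = 0" "a $ 0 = 0"
    using a b h unfolding fps_X_power_dvd_iff by auto
  then show "V1 $ 0 = 1"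
    using h V0 unfolding V1_def a_def b_def by (simp add: numeral_fps_const power2_eq_square)
qed

lemma residual_cross_term_dvd:
  fixes G Y Z S V :: "'a::field_char_0 fps"
  assumes R: "fps_X ^ Suc k dvd G * Y - (fps_deriv S) ^ 2"
    and ga: "fps_X ^ Suc k dvd V ^ 2 - Y"
    and dY: "fps_deriv Y = Z * fps_deriv S" and V0: "V $ 0 \<noteq> 0"
  shows "fps_X ^ k dvd G * Z * V - 2 * fps_deriv S * fps_deriv V"
proof -
  have dga: "fps_deriv (V ^ 2 - Y) = 2 * V * fps_deriv V - Z * fps_deriv S"
    using dY by (simp add: fps_deriv_power numeral_fps_const algebra_simps)
  have "V * (G * Z * V - 2 * fps_deriv S * fps_deriv V)
      = Z * (G * Y - (fps_deriv S) ^ 2) + G * Z * (V ^ 2 - Y)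
        - fps_deriv S * (2 * V * fps_deriv V - Z * fps_deriv S)"
    by (simp add: algebra_simps power2_eq_square)
  also have "\<dots> = Z * (G * Y - (fps_deriv S) ^ 2) + G * Z * (V ^ 2 - Y) - fps_deriv S * fps_deriv (V ^ 2 - Y)"
    by (simp only: dga)
  finally have "fps_X ^ k dvd V * (G * Z * V - 2 * fps_deriv S * fps_deriv V)"
    using power_le_dvd[OF R] power_le_dvd[OF ga] fps_X_power_dvd_deriv[OF ga]
    by (simp add: mult.assoc)
  then show ?thesis using V0 by (rule fps_X_power_dvd_cancel_unit)
qed

text \<open>After the correction \<open>S + V I\<close>, the terms of first order in the residual cancel up to
  \<open>I W\<close>, and the cross term \<open>W\<close> is small by residual_cross_term_dvd.\<close>

lemma newton_correction:
  fixes G S U1 V1 J1 :: "'a::field_char_0 fps" and H :: "'a poly"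
  assumes R: "fps_X ^ d dvd G * pcomp_fps H S - (fps_deriv S) ^ 2"
    and al: "fps_X ^ d dvd U1 * fps_deriv S - 1" and ga: "fps_X ^ d dvd V1 ^ 2 - pcomp_fps H S"
    and be: "fps_X ^ d dvd V1 * J1 - 1" and V10: "V1 $ 0 = 1" and d: "0 < d"
  defines "I \<equiv> fps_integral0 ((G * pcomp_fps H S - (fps_deriv S) ^ 2) * (U1 * J1 * fps_const (1 / 2)))"
  shows "fps_X ^ Suc d dvd I"
    and "fps_X ^ (2 * d) dvd G * pcomp_fps H (S + V1 * I) - (fps_deriv (S + V1 * I)) ^ 2"
proof -
  define c where "c = (fps_const (1 / 2) :: 'a fps)"
  have c2: "2 * c = 1"
    unfolding c_def by (simp add: numeral_fps_const fps_const_mult[symmetric])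
  define Rr where "Rr = G * pcomp_fps H S - (fps_deriv S) ^ 2"
  define I' where "I' = Rr * (U1 * J1 * c)"
  have dI: "fps_deriv I = I'"
    unfolding I_def I'_def Rr_def c_def by (rule fps_deriv_fps_integral)
  show I: "fps_X ^ Suc d dvd I"
    unfolding I_def by (rule fps_X_power_dvd_integral0 dvd_mult2[OF R])+
  define W where "W = G * pcomp_fps (pderiv H) S * V1 - 2 * fps_deriv S * fps_deriv V1"
  define e' where "e' = fps_deriv V1 * I + V1 * I'"
  obtain K where K: "pcomp_fps H (S + V1 * I)
      = pcomp_fps H S + pcomp_fps (pderiv H) S * (V1 * I) + (V1 * I) ^ 2 * K"
    using pcomp_fps_taylor by blast
  have "G * pcomp_fps H (S + V1 * I) - (fps_deriv (S + V1 * I)) ^ 2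
      = - Rr * ((U1 * fps_deriv S - 1) + (V1 * J1 - 1) + (U1 * fps_deriv S - 1) * (V1 * J1 - 1))
        + I * W + G * (V1 * I) ^ 2 * K - e' ^ 2"
    using c2 unfolding K W_def e'_def I'_def Rr_def fps_deriv_add fps_deriv_mult dI by algebra
  moreover have "fps_X ^ (2 * d) dvd Rr * ((U1 * fps_deriv S - 1) + (V1 * J1 - 1)
      + (U1 * fps_deriv S - 1) * (V1 * J1 - 1))"
  proof -
    have "fps_X ^ d dvd (U1 * fps_deriv S - 1) + (V1 * J1 - 1) + (U1 * fps_deriv S - 1) * (V1 * J1 - 1)"
      using al be by (intro dvd_add dvd_mult2)
    from fps_X_power_dvd_mult[OF R[folded Rr_def] this] show ?thesis by (simp add: mult_2)
  qed
  moreover have "fps_X ^ (2 * d) dvd I * W"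
  proof -
    have "fps_X ^ (d - 1) dvd W"
      unfolding W_def using d R ga V10
      by (intro residual_cross_term_dvd[where Y = "pcomp_fps H S"]) (simp_all add: fps_deriv_pcomp_fps)
    from fps_X_power_dvd_mult[OF I this] show ?thesis using d by (simp add: mult_2)
  qed
  moreover have "fps_X ^ (2 * d) dvd G * (V1 * I) ^ 2 * K"
  proof -
    have "fps_X ^ (2 * d) dvd I * I"
      using power_le_dvd[OF fps_X_power_dvd_mult[OF I I], of "2 * d"] by simp
    then have "fps_X ^ (2 * d) dvd I * I * (G * V1 ^ 2 * K)"
      by (rule dvd_mult2)
    then show ?thesis
      by (simp add: power2_eq_square mult_ac)
  qed
  moreover have "fps_X ^ (2 * d) dvd e' ^ 2"
  proof -
    have "fps_X ^ d dvd e'"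
      unfolding e'_def I'_def using power_le_dvd[OF I, of d] R[folded Rr_def]
      by simp
    from fps_X_power_dvd_mult[OF this this] show ?thesis by (simp add: power2_eq_square mult_2)
  qed
  ultimately show "fps_X ^ (2 * d) dvd G * pcomp_fps H (S + V1 * I) - (fps_deriv (S + V1 * I)) ^ 2"
    by simp
qed

lemma fps_ode_solution_unique:
  fixes S T G :: "'a::field_char_0 fps" and H :: "'a poly"
  assumes R: "fps_X ^ n dvd G * pcomp_fps H S - (fps_deriv S) ^ 2"
    and T: "G * pcomp_fps H T = (fps_deriv T) ^ 2"
    and "S $ 0 = 0" "T $ 0 = 0" "S $ 1 = 1" "T $ 1 = 1"
  shows "fps_X ^ Suc n dvd S - T"
proof -
  have "k \<le> n \<Longrightarrow> fps_X ^ Suc k dvd S - T" for k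
  proof (induction k)
    case 0
    then show ?case using assms fps_X_power_dvd_iff[of "Suc 0" "S - T"] by simp
  next
    case (Suc k)
    have eq: "(fps_deriv S + fps_deriv T) * fps_deriv (S - T)
        = - (G * pcomp_fps H S - (fps_deriv S) ^ 2) + (G * pcomp_fps H T - (fps_deriv T) ^ 2)
          + G * (pcomp_fps H S - pcomp_fps H T)"
      by (simp add: algebra_simps power2_eq_square)
    have "fps_X ^ Suc k dvd pcomp_fps H S - pcomp_fps H T"
      using Suc pcomp_fps_diff_dvd dvd_trans by (metis Suc_leD)
    then have "fps_X ^ Suc k dvd (fps_deriv S + fps_deriv T) * fps_deriv (S - T)"
      unfolding eq using power_le_dvd[OF R, of "Suc k"] Suc.prems T
      by (intro dvd_add dvd_mult) (simp_all add: dvd_diff_commute)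
    moreover have "(fps_deriv S + fps_deriv T) $ 0 \<noteq> 0"
      using assms by simp
    ultimately have "fps_X ^ Suc k dvd fps_deriv (S - T)"
      by (rule fps_X_power_dvd_cancel_unit)
    then show ?case
      by (rule fps_X_power_dvd_of_deriv) (use assms in simp)
  qed
  then show ?thesis by simp
qed

definition newton_inv ::
  "'a::field_char_0 fps \<Rightarrow> 'a poly \<Rightarrow> nat \<Rightarrow> 'a fps \<Rightarrow> 'a fps \<Rightarrow> 'a fps \<Rightarrow> 'a fps \<Rightarrow> bool" where
  "newton_inv G H h U V J S \<longleftrightarrow> 0 < h \<and>
     fps_X ^ (2 * h) dvd G * pcomp_fps H S - (fps_deriv S) ^ 2 \<and>
     fps_X ^ h dvd U * fps_deriv S - 1 \<and> fps_X ^ h dvd V ^ 2 - pcomp_fps H S \<and>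
     fps_X ^ h dvd V * J - 1 \<and> S $ 0 = 0 \<and> S $ 1 = 1 \<and> V $ 0 = 1"

lemma newton_step_correction:
  fixes G :: "'a::field_char_0 fps"
  assumes inv: "newton_inv G H h U V J S"
    and st: "newton_step m G H (2 * h, U, V, J, S) = (d', U1, V1, J1, S1)"
  shows "d' = 2 * (2 * h)" "V1 $ 0 = 1"
    and "fps_X ^ (2 * h) dvd U1 * fps_deriv S - 1" "fps_X ^ (2 * h) dvd V1 ^ 2 - pcomp_fps H S"
    and "fps_X ^ (2 * h) dvd V1 * J1 - 1"
    and "\<exists>S2. S1 = fps_cutoff (min (2 * (2 * h) + 1) m) S2 \<and> fps_X ^ Suc (2 * h) dvd S2 - S \<and>
           fps_X ^ (2 * (2 * h)) dvd G * pcomp_fps H S2 - (fps_deriv S2) ^ 2"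
proof -
  define I where
    "I = fps_integral0 ((G * pcomp_fps H S - (fps_deriv S) ^ 2) * (U1 * J1 * fps_const (1 / 2)))"
  have U1: "U1 = fps_cutoff (2 * h) (U * (2 - fps_deriv S * U))"
    and V1: "V1 = fps_cutoff (2 * h) ((V + J * pcomp_fps H S * (2 - V * J)) * fps_const (1 / 2))"
    and J1: "J1 = fps_cutoff (2 * h) (J * (2 - V1 * J))"
    and S1: "S1 = fps_cutoff (min (2 * (2 * h) + 1) m) (S + V1 * I)"
    and d': "d' = 2 * (2 * h)"
    using st unfolding newton_step_def I_def by (auto simp: Let_def)
  have h: "0 < h" and R: "fps_X ^ (2 * h) dvd G * pcomp_fps H S - (fps_deriv S) ^ 2"
    and Ui: "fps_X ^ h dvd U * fps_deriv S - 1" and Vi: "fps_X ^ h dvd V ^ 2 - pcomp_fps H S"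
    and Ji: "fps_X ^ h dvd V * J - 1" and V0: "V $ 0 = 1"
    using inv unfolding newton_inv_def by auto
  show "d' = 2 * (2 * h)" by (rule d')
  show al: "fps_X ^ (2 * h) dvd U1 * fps_deriv S - 1"
    unfolding U1 by (rule newton_inverse_step[OF Ui])
  note V = newton_sqrt_step[OF Vi Ji V0 h, folded V1]
  show "fps_X ^ (2 * h) dvd V1 ^ 2 - pcomp_fps H S" "V1 $ 0 = 1"
    using V by simp_all
  have "fps_X ^ (2 * h) dvd J1 * V1 - 1"
    unfolding J1 by (rule newton_inverse_step) (use V(2) in \<open>simp add: mult.commute\<close>)
  then show be: "fps_X ^ (2 * h) dvd V1 * J1 - 1"
    by (simp add: mult.commute)
  note C = newton_correction[OF R al V(1) be V(3), folded I_def]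
  show "\<exists>S2. S1 = fps_cutoff (min (2 * (2 * h) + 1) m) S2 \<and> fps_X ^ Suc (2 * h) dvd S2 - S \<and>
           fps_X ^ (2 * (2 * h)) dvd G * pcomp_fps H S2 - (fps_deriv S2) ^ 2"
    using C h S1 by auto
qed

lemma newton_step_inv:
  fixes G :: "'a::field_char_0 fps"
  assumes inv: "newton_inv G H h U V J S"
    and st: "newton_step m G H (2 * h, U, V, J, S) = (d', U1, V1, J1, S1)"
    and m: "2 * (2 * h) + 1 \<le> m"
  shows "newton_inv G H (2 * h) U1 V1 J1 S1"
proof -
  note C = newton_step_correction[OF inv st]
  obtain S2 where S1: "S1 = fps_cutoff (2 * (2 * h) + 1) S2" and S2S: "fps_X ^ Suc (2 * h) dvd S2 - S"
    and R2: "fps_X ^ (2 * (2 * h)) dvd G * pcomp_fps H S2 - (fps_deriv S2) ^ 2"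
    using C(6) m by (auto simp: min_absorb1)
  define E where "E = S1 - S2"
  have E: "fps_X ^ (2 * (2 * h) + 1) dvd E"
    unfolding E_def S1 by (rule fps_X_power_dvd_cutoff_diff)
  have S1S: "fps_X ^ Suc (2 * h) dvd S1 - S"
  proof -
    have "S1 - S = E + (S2 - S)"
      unfolding E_def by simp
    moreover have "fps_X ^ Suc (2 * h) dvd E"
      using power_le_dvd[OF E, of "Suc (2 * h)"] by simp
    ultimately show ?thesis
      using S2S by (metis dvd_add)
  qed
  have "G * pcomp_fps H S1 - (fps_deriv S1) ^ 2 = (G * pcomp_fps H S2 - (fps_deriv S2) ^ 2)
      + G * (pcomp_fps H S1 - pcomp_fps H S2) - fps_deriv E * (fps_deriv S1 + fps_deriv S2)"
    unfolding E_def by (simp add: algebra_simps power2_eq_square)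
  moreover have "fps_X ^ (2 * (2 * h)) dvd pcomp_fps H S1 - pcomp_fps H S2"
    using power_le_dvd[OF E, of "2 * (2 * h)"] pcomp_fps_diff_dvd[of S1 S2 H] unfolding E_def
    by (meson dvd_trans le_add1)
  ultimately have R1: "fps_X ^ (2 * (2 * h)) dvd G * pcomp_fps H S1 - (fps_deriv S1) ^ 2"
    using R2 fps_X_power_dvd_deriv[of "2 * (2 * h)" E] E by simp
  have "U1 * fps_deriv S1 - 1 = (U1 * fps_deriv S - 1) + U1 * fps_deriv (S1 - S)"
    by (simp add: algebra_simps)
  then have U1: "fps_X ^ (2 * h) dvd U1 * fps_deriv S1 - 1"
    using C(3) fps_X_power_dvd_deriv[OF S1S] by (metis dvd_add dvd_mult)
  have "fps_X ^ (2 * h) dvd pcomp_fps H S1 - pcomp_fps H S"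
    using dvd_trans[OF S1S pcomp_fps_diff_dvd] power_le_dvd by (metis le_SucI order_refl)
  moreover have "V1 ^ 2 - pcomp_fps H S1 = (V1 ^ 2 - pcomp_fps H S) - (pcomp_fps H S1 - pcomp_fps H S)"
    by simp
  ultimately have V1: "fps_X ^ (2 * h) dvd V1 ^ 2 - pcomp_fps H S1"
    using C(4) by (metis dvd_diff)
  have "S1 $ 0 = S $ 0" "S1 $ 1 = S $ 1"
    using S1S inv unfolding fps_X_power_dvd_iff newton_inv_def by auto
  then show ?thesis
    using inv R1 U1 V1 C(2,5) unfolding newton_inv_def by auto
qed

lemma fst_newton_step: "fst (newton_step m G H st) = 2 * fst st"
  by (cases st) (simp add: newton_step_def Let_def)

lemma fst_newton_run: "fst (newton_run m \<alpha> \<beta> G H k) = 2 ^ Suc k"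
  by (induction k) (simp_all add: newton_run_def newton_init_def fst_newton_step)

lemma newton_run_Suc: "newton_run m \<alpha> \<beta> G H (Suc k) = newton_step m G H (newton_run m \<alpha> \<beta> G H k)"
  by (simp add: newton_run_def)

lemma newton_states_eq:
  "newton_states m \<alpha> \<beta> G H = {newton_run m \<alpha> \<beta> G H k | k. \<forall>j<k. 2 ^ Suc j < m - 1}"
  by (simp add: newton_states_def fst_newton_run)

lemma newton_result_eq:
  "newton_result m \<alpha> \<beta> G H
     = snd (snd (snd (snd (newton_run m \<alpha> \<beta> G H (LEAST k. \<not> 2 ^ Suc k < m - 1)))))"
  by (simp add: newton_result_def fst_newton_run)

lemma newton_init_normalized:
  "G $ 1 + poly (pderiv H) 0 = 0 \<Longrightarrow> newton_init 0 1 G H = (2, 1, 1, 1, fps_X)"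
  by (simp add: newton_init_def)

lemma newton_inv_init:
  fixes G :: "'a::field_char_0 fps"
  assumes "G $ 0 = 1" "poly H 0 = 1" "G $ 1 + poly (pderiv H) 0 = 0"
  shows "newton_inv G H 1 1 1 1 fps_X"
proof -
  define P where "P = pcomp_fps H fps_X"
  have P0: "P $ 0 = 1"
    using assms(2) by (simp add: P_def pcomp_fps_nth_0)
  have "P $ 1 = poly (pderiv H) 0"
    using arg_cong[OF fps_deriv_pcomp_fps[of H fps_X], of "\<lambda>F. F $ 0"]
    by (simp add: P_def pcomp_fps_nth_0)
  moreover have "(G * P) $ 1 = G $ 0 * P $ 1 + G $ 1 * P $ 0"
    by (simp add: fps_mult_nth)
  ultimately have "fps_X ^ 2 dvd G * P - (fps_deriv fps_X) ^ 2"
    unfolding fps_X_power_dvd_iff using assms P0 by (auto simp: less_2_cases_iff add.commute)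
  moreover have "fps_X dvd 1 - P"
    using fps_X_power_dvd_iff[of 1 "1 - P"] P0 by simp
  ultimately show ?thesis
    using assms(1) unfolding P_def newton_inv_def by simp
qed

lemma newton_run_inv:
  fixes G :: "'a::field_char_0 fps"
  assumes norm: "G $ 0 = 1" "poly H 0 = 1" "G $ 1 + poly (pderiv H) 0 = 0"
    and "2 ^ Suc k < m - 1"
  shows "\<exists>U V J S. newton_run m 0 1 G H k = (2 * 2 ^ k, U, V, J, S) \<and> newton_inv G H (2 ^ k) U V J S"
  using assms(4)
proof (induction k)
  case 0
  then show ?case
    using newton_inv_init[OF norm] newton_init_normalized[OF norm(3)] by (simp add: newton_run_def)
next
  case (Suc k)
  then obtain U V J S where rk: "newton_run m 0 1 G H k = (2 * 2 ^ k, U, V, J, S)"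
    and inv: "newton_inv G H (2 ^ k) U V J S"
    by auto
  obtain d' U1 V1 J1 S1 where st: "newton_step m G H (2 * 2 ^ k, U, V, J, S) = (d', U1, V1, J1, S1)"
    by (metis prod_cases5)
  have "newton_inv G H (2 * 2 ^ k) U1 V1 J1 S1"
    using newton_step_inv[OF inv st] Suc.prems by simp
  moreover have "d' = 2 * 2 ^ Suc k"
    using newton_step_correction(1)[OF inv st] by simp
  ultimately show ?case
    using st rk by (simp add: newton_run_Suc)
qed

section \<open>Integrality and precision along a run\<close>

context padic_valuation
begin

lemma pint_fps_newton_run_S:
  fixes G :: "'a fps"
  assumes norm: "G $ 0 = 1" "poly H 0 = 1" "G $ 1 + poly (pderiv H) 0 = 0"
    and T: "pint_fps v T" "G * pcomp_fps H T = (fps_deriv T) ^ 2" "T $ 0 = 0" "T $ 1 = 1"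
    and k: "\<forall>j<k. 2 ^ Suc j < m - 1"
  shows "pint_fps v (snd (snd (snd (snd (newton_run m 0 1 G H k)))))"
proof (cases k)
  case 0
  then show ?thesis by (simp add: newton_run_def newton_init_normalized[OF norm(3)] pint_fps_X)
next
  case (Suc j)
  obtain U V J S where rj: "newton_run m 0 1 G H j = (2 * 2 ^ j, U, V, J, S)"
    and inv: "newton_inv G H (2 ^ j) U V J S"
    using newton_run_inv[OF norm] k Suc by blast
  obtain d' U1 V1 J1 S1 where st: "newton_step m G H (2 * 2 ^ j, U, V, J, S) = (d', U1, V1, J1, S1)"
    by (metis prod_cases5)
  obtain S2 where S1: "S1 = fps_cutoff (min (2 * (2 * 2 ^ j) + 1) m) S2"
    and S2S: "fps_X ^ Suc (2 * 2 ^ j) dvd S2 - S"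
    and R: "fps_X ^ (2 * (2 * 2 ^ j)) dvd G * pcomp_fps H S2 - (fps_deriv S2) ^ 2"
    using newton_step_correction(6)[OF inv st] by blast
  have "S2 $ 0 = S $ 0" "S2 $ 1 = S $ 1"
    using S2S unfolding fps_X_power_dvd_iff by auto
  then have "fps_X ^ Suc (2 * (2 * 2 ^ j)) dvd S2 - T"
    using inv T by (intro fps_ode_solution_unique[OF R T(2)]) (auto simp: newton_inv_def)
  then have "S1 = fps_cutoff (min (2 * (2 * 2 ^ j) + 1) m) T"
    unfolding S1 fps_X_power_dvd_iff by (auto simp: fps_eq_iff)
  then show ?thesis
    using rj st Suc T(1) by (simp add: newton_run_Suc pint_fps_def)
qed

text \<open>The correction term is an antiderivative and carries denominators; its integrality is read
  off from that of the new \<open>S\<close>.\<close>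

lemma pint_fps_cutoff_of_correction:
  assumes "pint_fps v (fps_cutoff N (S + V * I))" "pint_fps v S" "pint_fps v V" "V $ 0 = 1"
  shows "pint_fps v (fps_cutoff N I)"
proof -
  have "fps_cutoff N (V * fps_cutoff N I) = fps_cutoff N (S + V * I) - fps_cutoff N S"
    by (simp add: fps_cutoff_mult_cutoff fps_cutoff_add)
  then have "pint_fps v (fps_cutoff N (V * fps_cutoff N I))"
    using assms(1,2) by (simp add: pint_fps_def pdiv_diff)
  then have "pint_fps v (fps_cutoff N (inverse V * fps_cutoff N (V * fps_cutoff N I)))"
    using pint_fps_mult[OF pint_fps_inverse[OF assms(3,4)]] by (simp add: pint_fps_def)
  moreover have "fps_cutoff N (inverse V * fps_cutoff N (V * fps_cutoff N I)) = fps_cutoff N I"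
    using assms(4) by (simp add: fps_cutoff_mult_cutoff mult.assoc[symmetric] inverse_mult_eq_1)
  ultimately show ?thesis by simp
qed

lemma fps_cong_cutoff_correction:
  assumes S: "fps_cong e Sa Sb" and V: "fps_cong e Va Vb" "Va $ 0 = 1"
    and Q: "fps_cong e Qa Qb" "fps_X ^ d dvd Qa" "fps_X ^ d dvd Qb"
    and loss: "\<And>r. d < r \<Longrightarrow> r < N \<Longrightarrow> int (multiplicity p r) \<le> L"
    and L: "0 \<le> L" "L \<le> e"
    and Sa1: "pint_fps v (fps_cutoff N (Sa + Va * fps_integral0 Qa))"
  shows "fps_cong (e - L) (fps_cutoff N (Sa + Va * fps_integral0 Qa))
           (fps_cutoff N (Sb + Vb * fps_integral0 Qb))"
proof -
  have "fps_pdiv v (e - L) (fps_cutoff N (fps_integral0 (Qb - Qa)))"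
  proof (rule fps_pdiv_cutoff_integral0)
    show "fps_pdiv v e (Qb - Qa)"
      using Q(1) fps_pdiv_diff_commute by (simp add: fps_cong_def)
    fix n assume n: "0 < n" "n < N" "(Qb - Qa) $ (n - 1) \<noteq> 0"
    have "\<not> n - 1 < d"
    proof
      assume "n - 1 < d"
      then have "Qa $ (n - 1) = 0" "Qb $ (n - 1) = 0"
        using Q(2,3) unfolding fps_X_power_dvd_iff by auto
      then show False using n by simp
    qed
    then have "d < n"
      using n by linarith
    then show "int (multiplicity p n) \<le> L"
      using loss n by simp
  qed
  moreover have Ia: "pint_fps v (fps_cutoff N (fps_integral0 Qa))"
    using Sa1 S V unfolding fps_cong_def by (metis pint_fps_cutoff_of_correction)
  ultimately have "fps_cong (e - L) (fps_cutoff N (fps_integral0 Qa)) (fps_cutoff N (fps_integral0 Qb))"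
    using L pint_fps_of_pdiv_diff[OF Ia] fps_pdiv_diff_commute
    by (simp add: fps_cong_def fps_integral0_sub fps_cutoff_diff)
  moreover have "fps_cong (e - L) Sa Sb" "fps_cong (e - L) Va Vb"
    using L S V fps_cong_mono by auto
  ultimately have "fps_cong (e - L) (fps_cutoff N Sa + fps_cutoff N (Va * fps_cutoff N (fps_integral0 Qa)))
      (fps_cutoff N Sb + fps_cutoff N (Vb * fps_cutoff N (fps_integral0 Qb)))"
    by (intro fps_cong_add fps_cong_cutoff[of "e - L" Sa Sb] fps_cong_cutoff[OF fps_cong_mult])
  then show ?thesis
    by (simp add: fps_cutoff_mult_cutoff fps_cutoff_add)
qed

definition nstate_cong :: "int \<Rightarrow> 'a nstate \<Rightarrow> 'a nstate \<Rightarrow> bool" where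
  "nstate_cong e = (\<lambda>(d, U, V, J, S) (d', U', V', J', S').
     fps_cong e U U' \<and> fps_cong e V V' \<and> fps_cong e J J' \<and> fps_cong e S S')"

lemma newton_step_cong:
  fixes Ga Gb :: "'a fps"
  assumes inva: "newton_inv Ga Ha h Ua Va Ja Sa" and invb: "newton_inv Gb Hb h Ub Vb Jb Sb"
    and cong: "nstate_cong e (2 * h, Ua, Va, Ja, Sa) (2 * h, Ub, Vb, Jb, Sb)"
    and G: "fps_cong e Ga Gb"
    and H: "pint_poly v Ha" "pint_poly v Hb" "\<And>i. pdiv v e (coeff Ha i - coeff Hb i)"
    and loss: "\<And>r. 2 * h < r \<Longrightarrow> r < min (2 * (2 * h) + 1) m \<Longrightarrow> int (multiplicity p r) \<le> L"
    and L: "0 \<le> L" "L \<le> e"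
    and Sa1: "pint_fps v (snd (snd (snd (snd (newton_step m Ga Ha (2 * h, Ua, Va, Ja, Sa))))))"
  shows "nstate_cong (e - L) (newton_step m Ga Ha (2 * h, Ua, Va, Ja, Sa))
           (newton_step m Gb Hb (2 * h, Ub, Vb, Jb, Sb))"
proof -
  define N where "N = min (2 * (2 * h) + 1) m"
  define c where "c = (fps_const (1 / 2) :: 'a fps)"
  have c: "fps_cong e c c"
    unfolding c_def by (rule fps_cong_refl[OF pint_fps_half])
  have two: "fps_cong e 2 2"
    using fps_cong_refl[OF pint_fps_numeral] .
  have cU: "fps_cong e Ua Ub" and cV: "fps_cong e Va Vb" and cJ: "fps_cong e Ja Jb"
    and cS: "fps_cong e Sa Sb"
    using cong by (simp_all add: nstate_cong_def)
  have cHS: "fps_cong e (pcomp_fps Ha Sa) (pcomp_fps Hb Sb)"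
    by (rule fps_cong_pcomp_fps[OF H cS])
  define Ua1 Va1 Ja1 Ub1 Vb1 Jb1 where
    "Ua1 = fps_cutoff (2 * h) (Ua * (2 - fps_deriv Sa * Ua))"
    "Va1 = fps_cutoff (2 * h) ((Va + Ja * pcomp_fps Ha Sa * (2 - Va * Ja)) * c)"
    "Ja1 = fps_cutoff (2 * h) (Ja * (2 - Va1 * Ja))"
    "Ub1 = fps_cutoff (2 * h) (Ub * (2 - fps_deriv Sb * Ub))"
    "Vb1 = fps_cutoff (2 * h) ((Vb + Jb * pcomp_fps Hb Sb * (2 - Vb * Jb)) * c)"
    "Jb1 = fps_cutoff (2 * h) (Jb * (2 - Vb1 * Jb))"
  have cU1: "fps_cong e Ua1 Ub1" and cV1: "fps_cong e Va1 Vb1" and cJ1: "fps_cong e Ja1 Jb1"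
    unfolding Ua1_Va1_Ja1_Ub1_Vb1_Jb1_def
    by (intro fps_cong_cutoff fps_cong_mult fps_cong_add fps_cong_diff fps_cong_deriv
        cU cV cJ cS cHS two c)+
  define Qa Qb where
    "Qa = (Ga * pcomp_fps Ha Sa - (fps_deriv Sa) ^ 2) * (Ua1 * Ja1 * c)"
    "Qb = (Gb * pcomp_fps Hb Sb - (fps_deriv Sb) ^ 2) * (Ub1 * Jb1 * c)"
  have cQ: "fps_cong e Qa Qb"
    unfolding Qa_Qb_def
    by (intro fps_cong_mult fps_cong_diff fps_cong_power fps_cong_deriv G cHS cS cU1 cJ1 c)
  have dQ: "fps_X ^ (2 * h) dvd Qa" "fps_X ^ (2 * h) dvd Qb"
    using inva invb unfolding Qa_Qb_def newton_inv_def by auto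
  have step: "newton_step m Ga Ha (2 * h, Ua, Va, Ja, Sa)
      = (2 * (2 * h), Ua1, Va1, Ja1, fps_cutoff N (Sa + Va1 * fps_integral0 Qa))"
    "newton_step m Gb Hb (2 * h, Ub, Vb, Jb, Sb)
      = (2 * (2 * h), Ub1, Vb1, Jb1, fps_cutoff N (Sb + Vb1 * fps_integral0 Qb))"
    unfolding newton_step_def Ua1_Va1_Ja1_Ub1_Vb1_Jb1_def Qa_Qb_def N_def c_def by (simp_all add: Let_def)
  have V0: "Va1 $ 0 = 1"
    using newton_step_correction(2)[OF inva step(1)] .
  have "pint_fps v (fps_cutoff N (Sa + Va1 * fps_integral0 Qa))"
    using Sa1 unfolding step(1) by simp
  then have "fps_cong (e - L) (fps_cutoff N (Sa + Va1 * fps_integral0 Qa))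
      (fps_cutoff N (Sb + Vb1 * fps_integral0 Qb))"
    using loss unfolding N_def by (intro fps_cong_cutoff_correction[OF cS cV1 V0 cQ dQ _ L])
  then show ?thesis
    unfolding step nstate_cong_def using L cU1 cV1 cJ1 by (simp add: fps_cong_mono)
qed

lemma newton_run_cong:
  fixes Ga Gb :: "'a fps" and \<delta> :: "nat \<Rightarrow> nat" and \<mu> :: int
  assumes norm_a: "Ga $ 0 = 1" "poly Ha 0 = 1" "Ga $ 1 + poly (pderiv Ha) 0 = 0"
    and norm_b: "Gb $ 0 = 1" "poly Hb 0 = 1" "Gb $ 1 + poly (pderiv Hb) 0 = 0"
    and T: "pint_fps v T" "Ga * pcomp_fps Ha T = (fps_deriv T) ^ 2" "T $ 0 = 0" "T $ 1 = 1"
    and G: "fps_cong \<mu> Ga Gb"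
    and H: "pint_poly v Ha" "pint_poly v Hb" "\<And>i. pdiv v \<mu> (coeff Ha i - coeff Hb i)"
    and loss: "\<And>j r. 2 ^ Suc j < r \<Longrightarrow> r < min (2 * 2 ^ Suc j + 1) m \<Longrightarrow> multiplicity p r \<le> \<delta> j"
  shows "\<forall>j<k. 2 ^ Suc j < m - 1 \<Longrightarrow> int (\<Sum>j<k. \<delta> j) \<le> \<mu> \<Longrightarrow>
    nstate_cong (\<mu> - int (\<Sum>j<k. \<delta> j)) (newton_run m 0 1 Ga Ha k) (newton_run m 0 1 Gb Hb k)"
proof (induction k)
  case 0
  then show ?case
    using newton_init_normalized[OF norm_a(3)] newton_init_normalized[OF norm_b(3)]
    by (simp add: newton_run_def nstate_cong_def fps_cong_refl pint_fps_1 pint_fps_X)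
next
  case (Suc k)
  define e where "e = \<mu> - int (\<Sum>j<k. \<delta> j)"
  have e: "int (\<delta> k) \<le> e" "e \<le> \<mu>"
    using Suc.prems(2) of_nat_0_le_iff[of "\<Sum>j<k. \<delta> j"] unfolding e_def
    by (simp_all del: of_nat_sum)
  have IH: "nstate_cong e (newton_run m 0 1 Ga Ha k) (newton_run m 0 1 Gb Hb k)"
    using Suc e unfolding e_def by simp
  have lt: "2 ^ Suc k < m - 1"
    using Suc.prems(1) by simp
  obtain Ua Va Ja Sa where ra: "newton_run m 0 1 Ga Ha k = (2 * 2 ^ k, Ua, Va, Ja, Sa)"
    and inva: "newton_inv Ga Ha (2 ^ k) Ua Va Ja Sa"
    using newton_run_inv[OF norm_a lt] by blast
  obtain Ub Vb Jb Sb where rb: "newton_run m 0 1 Gb Hb k = (2 * 2 ^ k, Ub, Vb, Jb, Sb)"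
    and invb: "newton_inv Gb Hb (2 ^ k) Ub Vb Jb Sb"
    using newton_run_inv[OF norm_b lt] by blast
  have "pint_fps v (snd (snd (snd (snd (newton_step m Ga Ha (2 * 2 ^ k, Ua, Va, Ja, Sa))))))"
    using pint_fps_newton_run_S[OF norm_a T Suc.prems(1)] ra by (simp add: newton_run_Suc)
  then have "nstate_cong (e - int (\<delta> k)) (newton_step m Ga Ha (2 * 2 ^ k, Ua, Va, Ja, Sa))
      (newton_step m Gb Hb (2 * 2 ^ k, Ub, Vb, Jb, Sb))"
    using e IH[unfolded ra rb] fps_cong_mono[OF G] pdiv_mono[OF H(3)] loss[of k]
    by (intro newton_step_cong[OF inva invb _ _ H(1,2)]) auto
  then show ?case
    using ra rb by (simp add: newton_run_Suc e_def algebra_simps)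
qed

theorem newton_result_precision:
  fixes Ga Gb :: "'a fps" and \<delta> :: "nat \<Rightarrow> nat" and \<mu> :: int
  assumes norm_a: "Ga $ 0 = 1" "poly Ha 0 = 1" "Ga $ 1 + poly (pderiv Ha) 0 = 0"
    and norm_b: "Gb $ 0 = 1" "poly Hb 0 = 1" "Gb $ 1 + poly (pderiv Hb) 0 = 0"
    and T: "pint_fps v T" "Ga * pcomp_fps Ha T = (fps_deriv T) ^ 2" "T $ 0 = 0" "T $ 1 = 1"
    and G: "fps_cong \<mu> Ga Gb"
    and H: "pint_poly v Ha" "pint_poly v Hb" "\<And>i. pdiv v \<mu> (coeff Ha i - coeff Hb i)"
    and loss: "\<And>j r. 2 ^ Suc j < r \<Longrightarrow> r < min (2 * 2 ^ Suc j + 1) m \<Longrightarrow> multiplicity p r \<le> \<delta> j"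
    and total_loss: "\<And>k. \<forall>j<k. 2 ^ Suc j < m - 1 \<Longrightarrow> (\<Sum>j<k. \<delta> j) \<le> \<Delta>" "int \<Delta> \<le> \<mu>"
  shows "(\<forall>st \<in> newton_states m 0 1 Gb Hb. state_pint v st) \<and>
    (\<forall>n. pdiv v (\<mu> - int \<Delta>) (newton_result m 0 1 Gb Hb $ n - newton_result m 0 1 Ga Ha $ n))"
proof -
  have cong: "nstate_cong (\<mu> - int (\<Sum>j<k. \<delta> j)) (newton_run m 0 1 Ga Ha k) (newton_run m 0 1 Gb Hb k)"
    and loss_le: "(\<Sum>j<k. \<delta> j) \<le> \<Delta>"
    if "\<forall>j<k. 2 ^ Suc j < m - 1" for k
  proof -
    show le: "(\<Sum>j<k. \<delta> j) \<le> \<Delta>"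
      using total_loss(1)[OF that] .
    show "nstate_cong (\<mu> - int (\<Sum>j<k. \<delta> j)) (newton_run m 0 1 Ga Ha k) (newton_run m 0 1 Gb Hb k)"
    proof (rule newton_run_cong[where \<delta> = \<delta>, OF norm_a norm_b T G H loss that])
      show "int (\<Sum>j<k. \<delta> j) \<le> \<mu>"
        using le total_loss(2) by linarith
    qed
  qed
  have "state_pint v st" if "st \<in> newton_states m 0 1 Gb Hb" for st
  proof -
    have "\<exists>k. st = newton_run m 0 1 Gb Hb k \<and> (\<forall>j<k. 2 ^ Suc j < m - 1)"
      using that unfolding newton_states_eq by simp
    then obtain k where k: "\<forall>j<k. 2 ^ Suc j < m - 1" and st: "st = newton_run m 0 1 Gb Hb k"
      by blast
    obtain da Ua Va Ja Sa where "newton_run m 0 1 Ga Ha k = (da, Ua, Va, Ja, Sa)"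
      by (metis prod_cases5)
    moreover obtain db Ub Vb Jb Sb where "newton_run m 0 1 Gb Hb k = (db, Ub, Vb, Jb, Sb)"
      by (metis prod_cases5)
    ultimately show ?thesis
      using cong[OF k] unfolding st by (simp add: nstate_cong_def fps_cong_def state_pint_def)
  qed
  moreover have "pdiv v (\<mu> - int \<Delta>) (newton_result m 0 1 Gb Hb $ n - newton_result m 0 1 Ga Ha $ n)" for n
  proof -
    define K where "K = (LEAST k. \<not> 2 ^ Suc k < m - 1)"
    have K: "\<forall>j<K. 2 ^ Suc j < m - 1"
      unfolding K_def using not_less_Least by blast
    obtain da Ua Va Ja Sa where "newton_run m 0 1 Ga Ha K = (da, Ua, Va, Ja, Sa)"
      by (metis prod_cases5)
    moreover obtain db Ub Vb Jb Sb where "newton_run m 0 1 Gb Hb K = (db, Ub, Vb, Jb, Sb)"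
      by (metis prod_cases5)
    ultimately have "fps_pdiv v (\<mu> - int (\<Sum>j<K. \<delta> j))
        (newton_result m 0 1 Ga Ha - newton_result m 0 1 Gb Hb)"
      using cong[OF K] unfolding newton_result_eq K_def[symmetric]
      by (simp add: nstate_cong_def fps_cong_def)
    then show ?thesis
      using loss_le[OF K] unfolding fps_pdiv_def
      by (metis fps_sub_nth of_nat_le_iff diff_left_mono pdiv_diff_commute pdiv_mono)
  qed
  ultimately show ?thesis by blast
qed

end

section \<open>The power series attached to a normalized isogeny\<close>

lemma poly_pderiv_reflect_poly:
  fixes x :: "'a::field_char_0"
  assumes x: "x \<noteq> 0"
  shows "x * poly (pderiv (reflect_poly p)) x =
     of_nat (degree p) * x ^ degree p * poly p (inverse x)
     - x ^ degree p * inverse x * poly (pderiv p) (inverse x)"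
proof (induction p rule: pCons_induct)
  case (pCons a p)
  show ?case
  proof (cases "p = 0")
    case False
    have "x * poly (pderiv (reflect_poly (pCons a p))) x
        = x * poly (pderiv (reflect_poly p)) x + of_nat (Suc (degree p)) * a * x ^ Suc (degree p)"
      using False x by (simp add: reflect_poly_pCons' pderiv_add pderiv_monom poly_monom algebra_simps)
    also have "\<dots> = of_nat (degree (pCons a p)) * x ^ degree (pCons a p) * poly (pCons a p) (inverse x)
        - x ^ degree (pCons a p) * inverse x * poly (pderiv (pCons a p)) (inverse x)"
      unfolding pCons.IH using False x by (simp add: pderiv_pCons field_simps)
    finally show ?thesis .
  qed simp
qed simp

lemma poly_reflect_poly_square:
  fixes N :: "'a::field_char_0 poly"
  assumes z: "z \<noteq> 0"
  defines "P \<equiv> pcompose (reflect_poly N) [:0, 0, 1:]"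
  shows "poly P z = (z ^ 2) ^ degree N * poly N (inverse (z ^ 2))"
    and "z * poly (pderiv P) z = 2 * (of_nat (degree N) * (z ^ 2) ^ degree N * poly N (inverse (z ^ 2))
           - (z ^ 2) ^ degree N * inverse (z ^ 2) * poly (pderiv N) (inverse (z ^ 2)))"
proof -
  have sq: "poly [:0, 0, 1:] z = z ^ 2"
    by (simp add: power2_eq_square)
  show "poly P z = (z ^ 2) ^ degree N * poly N (inverse (z ^ 2))"
    unfolding P_def poly_pcompose sq using z by (simp add: poly_reflect_poly_nz)
  have "z * poly (pderiv P) z = 2 * (z ^ 2 * poly (pderiv (reflect_poly N)) (z ^ 2))"
    unfolding P_def by (simp add: pderiv_pcompose poly_pcompose pderiv_pCons power2_eq_square algebra_simps)
  then show "z * poly (pderiv P) z = 2 * (of_nat (degree N) * (z ^ 2) ^ degree N * poly N (inverse (z ^ 2))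
           - (z ^ 2) ^ degree N * inverse (z ^ 2) * poly (pderiv N) (inverse (z ^ 2)))"
    using poly_pderiv_reflect_poly[of "z ^ 2" N] z by simp
qed

lemma poly_eqI_nonzero:
  fixes A B :: "'a::field_char_0 poly"
  assumes "\<And>z. z \<noteq> 0 \<Longrightarrow> poly A z = poly B z"
  shows "A = B"
proof -
  have "\<forall>z. poly ([:0, 1:] * (A - B)) z = 0"
    using assms by auto
  then have "[:0, 1:] * (A - B) = 0"
    using poly_all_0_iff_0 by blast
  then show ?thesis by simp
qed

text \<open>The curve identity of the isogeny, transported along \<open>x = 1/z\<^sup>2\<close> and multiplied out by
  \<open>z\<^bsup>2l\<^esup>\<close>; here \<open>Nx = N(x)\<close>, \<open>Dx = D(x)\<close>, \<open>A = y\<^bsup>l-1\<^esup>\<close> and \<open>L = l\<close>.\<close>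

lemma isogeny_field_identity:
  fixes y x A Nx Dx Nd Dd L a4 a6 a4' a6' :: "'a::field"
  assumes xy: "x * y = 1"
    and iso: "(x^3 + a4 * x + a6) * (Nd * Dx - Nx * Dd)^2 = Dx * (Nx^3 + a4' * (Nx * Dx^2) + a6' * Dx^3)"
  shows "(2 * (A * Dx) * (y * A * Nx) + 2 * ((L - 1) * A * Dx - A * x * Dd) * (y * A * Nx)
            - 2 * (A * Dx) * (L * y * A * Nx - y * A * x * Nd))^2 * (1 + a4 * y^2 + a6 * y^3)
       = 4 * (A * Dx) * ((y * A * Nx)^3 + a4' * (y^2 * (A * Dx)^2 * (y * A * Nx)) + a6' * (y^3 * (A * Dx)^3))"
  using xy iso by algebra

lemma normalized_isogeny_reflected_identity:
  fixes N D :: "'a::field_char_0 poly"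
  assumes iso: "normalized_isogeny a4 a6 a4' a6' l N D" and l: "1 \<le> l"
  defines "P \<equiv> pcompose (reflect_poly N) [:0, 0, 1:]"
  defines "Q \<equiv> pcompose (reflect_poly D) [:0, 0, 1:]"
  shows "(smult 2 (Q * P) + [:0, 1:] * (pderiv Q * P - Q * pderiv P))^2
           * (1 + smult a4 ([:0, 1:]^4) + smult a6 ([:0, 1:]^6))
       = smult 4 (Q * (P^3 + smult a4' ([:0, 1:]^4 * Q^2 * P) + smult a6' ([:0, 1:]^6 * Q^3)))"
proof (rule poly_eqI_nonzero)
  fix z :: 'a assume z: "z \<noteq> 0"
  define y where "y = z ^ 2"
  define x where "x = inverse y"
  define A where "A = y ^ (l - 1)"
  define L where "L = (of_nat l :: 'a)"
  have dN: "degree N = l" and dD: "degree D = l - 1"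
    using iso unfolding normalized_isogeny_def by auto
  have yl: "y ^ l = y * A"
    unfolding A_def using l by (metis Suc_diff_1 less_le_trans zero_less_one power_Suc)
  have Lm: "of_nat (l - 1) = L - 1"
    unfolding L_def using l by (simp add: of_nat_diff)
  have xy: "x * y = 1"
    unfolding x_def y_def using z by simp
  note RN = poly_reflect_poly_square[OF z, of N, folded P_def y_def x_def, unfolded dN yl, folded L_def]
  note RD = poly_reflect_poly_square[OF z, of D, folded Q_def y_def x_def, unfolded dD Lm, folded A_def]
  have "(x^3 + a4 * x + a6) * (poly (pderiv N) x * poly D x - poly N x * poly (pderiv D) x)^2
      = poly D x * (poly N x ^ 3 + a4' * (poly N x * poly D x ^ 2) + a6' * poly D x ^ 3)"
  proof -
    have "wcubic a4 a6 * (pderiv N * D - N * pderiv D) ^ 2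
        = D * (N ^ 3 + smult a4' (N * D ^ 2) + smult a6' (D ^ 3))"
      using iso unfolding normalized_isogeny_def by blast
    from arg_cong[OF this, of "\<lambda>q. poly q x"] show ?thesis
      by (simp add: wcubic_def algebra_simps power2_eq_square power3_eq_cube)
  qed
  note FI = isogeny_field_identity[OF xy this, of A L]
  have z4: "z^4 = y^2" "z^6 = y^3"
    unfolding y_def by (simp_all add: power_mult[symmetric])
  have "(2 * poly Q z * poly P z + (z * poly (pderiv Q) z) * poly P z - poly Q z * (z * poly (pderiv P) z))^2
           * (1 + a4 * z^4 + a6 * z^6)
      = 4 * poly Q z * (poly P z ^ 3 + a4' * (z^4 * poly Q z ^ 2 * poly P z) + a6' * (z^6 * poly Q z ^ 3))"
    unfolding RN RD z4 using FI by (simp add: algebra_simps)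
  then show "poly ((smult 2 (Q * P) + [:0, 1:] * (pderiv Q * P - Q * pderiv P))^2
           * (1 + smult a4 ([:0, 1:]^4) + smult a6 ([:0, 1:]^6))) z
      = poly (smult 4 (Q * (P^3 + smult a4' ([:0, 1:]^4 * Q^2 * P) + smult a6' ([:0, 1:]^6 * Q^3)))) z"
    by (simp add: algebra_simps)
qed

lemma pcomp_fps_Hpol: "pcomp_fps (Hpol c4 c6) S = 1 + fps_const c4 * S ^ 4 + fps_const c6 * S ^ 6"
  by (simp add: pcomp_fps_def Hpol_def map_poly_pCons) algebra

text \<open>With \<open>W = X\<^sup>2 Q / P\<close>, i.e. \<open>1 / W\<close> is the \<open>x\<close>-coordinate \<open>N(x)/D(x)\<close> of the isogeny at
  \<open>x = 1/z\<^sup>2\<close>, the reflected identity says \<open>W'\<^sup>2 Gp = 4 W H(\<surd>W)\<close>; so \<open>T = \<surd>W\<close>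
  solves the differential equation exactly.\<close>

lemma ode_solution_of_reflected_identity:
  fixes P Q Gp :: "'a::field_char_0 fps"
  assumes P0: "P $ 0 = 1" and Q0: "Q $ 0 = 1"
    and FI: "(fps_const 2 * (Q * P) + fps_X * (fps_deriv Q * P - Q * fps_deriv P)) ^ 2 * Gp
      = fps_const 4 * (Q * (P ^ 3 + fps_const c4 * (fps_X ^ 4 * Q ^ 2 * P) + fps_const c6 * (fps_X ^ 6 * Q ^ 3)))"
  defines "T \<equiv> fps_X * fps_radical (\<lambda>k a. 1) 2 (Q * inverse P)"
  shows "(fps_deriv T) ^ 2 * Gp = pcomp_fps (Hpol c4 c6) T" "T $ 0 = 0" "T $ 1 = 1"
proof -
  define W where "W = fps_X ^ 2 * Q * inverse P"
  have c24: "fps_const (2::'a) * fps_const 2 = fps_const 4"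
    by (simp add: fps_const_mult[symmetric])
  have WE: "(fps_deriv W) ^ 2 * Gp = fps_const 4 * W * (1 + fps_const c4 * W ^ 2 + fps_const c6 * W ^ 3)"
  proof -
    have PIP: "P * inverse P = 1"
      using P0 by (simp add: inverse_mult_eq_1')
    have "fps_deriv (inverse P) = - fps_deriv P * inverse P ^ 2"
      using P0 by (simp add: fps_inverse_deriv)
    moreover have "fps_deriv W = fps_const 2 * fps_X * Q * inverse P + fps_X ^ 2 * fps_deriv Q * inverse P
        + fps_X ^ 2 * Q * fps_deriv (inverse P)"
      unfolding W_def by (simp add: fps_deriv_power algebra_simps numeral_fps_const)
    ultimately show ?thesis
      using FI PIP c24 unfolding W_def by algebra
  qed
  define R where "R = fps_radical (\<lambda>k a. 1) 2 (Q * inverse P)"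
  have R0: "R $ 0 = 1"
    unfolding R_def by simp
  have "R ^ 2 = Q * inverse P"
    using power_radical[of "Q * inverse P" "\<lambda>k a. 1" 1] P0 Q0 unfolding R_def by (simp add: numeral_2_eq_2)
  then have TW: "T ^ 2 = W"
    unfolding T_def R_def[symmetric] W_def by (simp add: power_mult_distrib mult.assoc)
  have dW: "fps_deriv W = fps_const 2 * T * fps_deriv T"
    unfolding TW[symmetric] by (simp add: fps_deriv_power numeral_fps_const power2_eq_square)
  show T0: "T $ 0 = 0" "T $ 1 = 1"
    unfolding T_def R_def[symmetric] using R0 by simp_all
  have "fps_const 4 * T ^ 2 * ((fps_deriv T) ^ 2 * Gp) = (fps_deriv W) ^ 2 * Gp"
    unfolding dW c24[symmetric] by (simp add: power2_eq_square mult_ac)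
  also have "\<dots> = fps_const 4 * W * (1 + fps_const c4 * W ^ 2 + fps_const c6 * W ^ 3)"
    by (rule WE)
  also have "\<dots> = fps_const 4 * T ^ 2 * pcomp_fps (Hpol c4 c6) T"
    unfolding pcomp_fps_Hpol TW[symmetric] by (simp add: power_mult[symmetric])
  finally have "fps_const 4 * T ^ 2 * ((fps_deriv T) ^ 2 * Gp) = fps_const 4 * T ^ 2 * pcomp_fps (Hpol c4 c6) T" .
  moreover have "T \<noteq> 0"
    using T0 by auto
  ultimately show "(fps_deriv T) ^ 2 * Gp = pcomp_fps (Hpol c4 c6) T"
    by simp
qed

lemma Gser_eq_inverse: "Gser a4 a6 = inverse (1 + fps_const a4 * fps_X ^ 4 + fps_const a6 * fps_X ^ 6)"
  by (simp add: Gser_def algebra_simps)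

lemma Gser_nth_0: "Gser a4 a6 $ 0 = (1 :: 'a::field)"
  by (simp add: Gser_eq_inverse)

lemma Gser_nth_1: "Gser a4 a6 $ 1 = (0 :: 'a::field)"
proof -
  define P where "P = 1 + fps_const a4 * fps_X ^ 4 + (fps_const a6 * fps_X ^ 6 :: 'a fps)"
  have "(P * inverse P) $ 1 = 0"
    by (simp add: P_def inverse_mult_eq_1')
  moreover have "(P * inverse P) $ 1 = P $ 0 * inverse P $ 1 + P $ 1 * inverse P $ 0"
    by (simp add: fps_mult_nth)
  ultimately show ?thesis
    by (simp add: Gser_eq_inverse P_def[symmetric]) (simp add: P_def)
qed

context padic_valuation
begin

lemma pint_poly_0 [simp]: "pint_poly v 0"
  by (simp add: pint_poly_def)

lemma pint_poly_add: "pint_poly v P \<Longrightarrow> pint_poly v Q \<Longrightarrow> pint_poly v (P + Q)"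
  by (simp add: pint_poly_def pdiv_add)

lemma pint_poly_mult: "pint_poly v P \<Longrightarrow> pint_poly v Q \<Longrightarrow> pint_poly v (P * Q)"
  unfolding pint_poly_def coeff_mult by (auto intro!: pdiv_sum pint_mult)

lemma pint_poly_pcompose: "pint_poly v P \<Longrightarrow> pint_poly v Q \<Longrightarrow> pint_poly v (pcompose P Q)"
proof (induction P rule: pCons_induct)
  case (pCons a P)
  then show ?case
    by (simp add: pcompose_pCons pint_poly_pCons_iff pint_poly_add pint_poly_mult)
qed (simp add: pint_poly_def)

lemma pint_poly_reflect_square:
  assumes "pint_poly v N"
  shows "pint_poly v (pcompose (reflect_poly N) [:0, 0, 1:])"
proof (rule pint_poly_pcompose)
  show "pint_poly v (reflect_poly N)"
    using assms by (simp add: pint_poly_def coeff_reflect_poly)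
  show "pint_poly v [:0, 0, 1:]"
    by (simp add: pint_poly_pCons_iff pint_1)
qed

lemma normalized_isogeny_ode_solution:
  fixes N D :: "'a poly"
  assumes iso: "normalized_isogeny a4 a6 a4' a6' l N D" and l: "1 \<le> l"
    and N: "pint_poly v N" and D: "pint_poly v D"
  shows "\<exists>T. pint_fps v T \<and> Gser a4 a6 * pcomp_fps (Hpol a4' a6') T = (fps_deriv T) ^ 2 \<and>
    T $ 0 = 0 \<and> T $ 1 = 1"
proof -
  define P where "P = fps_of_poly (pcompose (reflect_poly N) [:0, 0, 1:])"
  define Q where "Q = fps_of_poly (pcompose (reflect_poly D) [:0, 0, 1:])"
  define Gp where "Gp = (1 :: 'a fps) + fps_const a4 * fps_X ^ 4 + fps_const a6 * fps_X ^ 6"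
  have FI: "(fps_const 2 * (Q * P) + fps_X * (fps_deriv Q * P - Q * fps_deriv P)) ^ 2 * Gp
      = fps_const 4 * (Q * (P ^ 3 + fps_const a4' * (fps_X ^ 4 * Q ^ 2 * P) + fps_const a6' * (fps_X ^ 6 * Q ^ 3)))"
    using arg_cong[OF normalized_isogeny_reflected_identity[OF iso l], of fps_of_poly]
    unfolding P_def Q_def Gp_def
    by (simp only: fps_of_poly_add fps_of_poly_diff fps_of_poly_mult fps_of_poly_smult
        fps_of_poly_power fps_of_poly_pderiv fps_of_poly_fps_X fps_of_poly_1)
  have "lead_coeff N = 1" "lead_coeff D = 1"
    using iso unfolding normalized_isogeny_def by auto
  then have P0: "P $ 0 = 1" and Q0: "Q $ 0 = 1"
    unfolding P_def Q_def by (simp_all add: poly_0_coeff_0[symmetric] poly_pcompose)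
  note T = ode_solution_of_reflected_identity[OF P0 Q0 FI]
  define T where "T = fps_X * fps_radical (\<lambda>k a. 1) 2 (Q * inverse P)"
  have "Gser a4 a6 * pcomp_fps (Hpol a4' a6') T = (fps_deriv T) ^ 2"
    using T(1)[folded T_def, symmetric] unfolding Gser_eq_inverse Gp_def[symmetric]
    by (simp add: inverse_mult_eq_1 Gp_def mult.assoc[symmetric])
  moreover have "pint_fps v T"
  proof -
    have "pint_fps v (Q * inverse P)"
      unfolding P_def Q_def
      using pint_fps_inverse[OF pint_fps_of_poly[OF pint_poly_reflect_square[OF N]] P0[unfolded P_def]]
        pint_fps_of_poly[OF pint_poly_reflect_square[OF D]]
      by (simp add: pint_fps_mult)
    moreover define R where "R = fps_radical (\<lambda>k a. 1) 2 (Q * inverse P)"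
    have "R ^ 2 = Q * inverse P"
      using power_radical[of "Q * inverse P" "\<lambda>k a. 1" 1] P0 Q0 unfolding R_def
      by (simp add: numeral_2_eq_2)
    then have "R * R = Q * inverse P"
      by (simp add: power2_eq_square)
    moreover have "R $ 0 = 1"
      unfolding R_def by simp
    ultimately have "pint_fps v R"
      using pint_fps_sqrt \<open>pint_fps v (Q * inverse P)\<close> by blast
    then show ?thesis
      unfolding T_def R_def[symmetric] by (rule pint_fps_mult[OF pint_fps_X])
  qed
  ultimately show ?thesis
    using T(2,3) unfolding T_def by blast
qed

end

lemma poly_Hpol_0: "poly (Hpol c4 c6) 0 = 1"
  by (simp add: Hpol_def)

lemma poly_pderiv_Hpol_0: "poly (pderiv (Hpol c4 c6)) 0 = 0"
  by (simp add: Hpol_def pderiv_pCons)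

context padic_valuation
begin

lemma pint_poly_Hpol: "pint v c4 \<Longrightarrow> pint v c6 \<Longrightarrow> pint_poly v (Hpol c4 c6)"
  by (simp add: Hpol_def pint_poly_pCons_iff pint_1)

lemma pdiv_coeff_Hpol_diff:
  "pdiv v e (c4 - d4) \<Longrightarrow> pdiv v e (c6 - d6) \<Longrightarrow> pdiv v e (coeff (Hpol c4 c6) i - coeff (Hpol d4 d6) i)"
  by (simp add: Hpol_def coeff_pCons split: nat.split)

lemma fps_cong_Gser:
  assumes "pint v a4" "pint v a6" "pint v b4" "pint v b6"
    and "pdiv v e (a4 - b4)" "pdiv v e (a6 - b6)"
  shows "fps_cong e (Gser a4 a6) (Gser b4 b6)"
  unfolding Gser_eq_inverse using assms
  by (intro fps_cong_inverse fps_cong_add fps_cong_mult fps_cong_power fps_cong_const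
      fps_cong_refl[OF pint_fps_X] fps_cong_refl[OF pint_fps_1]) simp_all

end

lemma multiplicity_le_LpLoss:
  assumes "2 ^ Suc j < r" "r < min (2 * 2 ^ Suc j + 1) (4 * l)"
  shows "multiplicity p r \<le> LpLoss p l (Suc j)"
proof -
  have "{PDiv p r | r. 2 ^ Suc j + 1 \<le> r \<and> r \<le> min (2 ^ (Suc j + 1)) (4 * l - 1)} \<subseteq> PDiv p ` {..4 * l}"
    by auto
  then have "finite {PDiv p r | r. 2 ^ Suc j + 1 \<le> r \<and> r \<le> min (2 ^ (Suc j + 1)) (4 * l - 1)}"
    by (rule finite_subset) simp
  moreover have "PDiv p r \<in> {PDiv p r | r. 2 ^ Suc j + 1 \<le> r \<and> r \<le> min (2 ^ (Suc j + 1)) (4 * l - 1)}"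
    using assms by auto
  ultimately show ?thesis
    unfolding LpLoss_def by (simp add: Max_ge flip: PDiv_def)
qed

lemma sum_LpLoss_le_Loss:
  assumes "\<forall>j<k. 2 ^ Suc j < 4 * l - 1"
  shows "(\<Sum>j<k. LpLoss p l (Suc j)) \<le> Loss p l"
proof -
  have "{i. 1 \<le> i \<and> 2 ^ i < 4 * l - 1} \<subseteq> {..<4 * l}"
  proof
    fix i assume "i \<in> {i. 1 \<le> i \<and> 2 ^ i < 4 * l - 1}"
    then have "2 ^ i < 4 * l - 1"
      by simp
    moreover have "i < 2 ^ i"
      by (rule less_exp)
    ultimately have "i < 4 * l - 1"
      by (metis less_trans)
    then show "i \<in> {..<4 * l}"
      by simp
  qed
  then have "finite {i. 1 \<le> i \<and> 2 ^ i < 4 * l - 1}"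
    by (rule finite_subset) simp
  moreover have "Suc ` {..<k} \<subseteq> {i. 1 \<le> i \<and> 2 ^ i < 4 * l - 1}"
    using assms by auto
  ultimately have "(\<Sum>i\<in>Suc ` {..<k}. LpLoss p l i) \<le> Loss p l"
    unfolding Loss_def by (rule sum_mono2) simp
  then show ?thesis by (simp add: sum.reindex)
qed

theorem lemma4p2:
  fixes p l \<mu> :: nat and v :: "'a::field_char_0 \<Rightarrow> int"
    and a4 a6 a4' a6' :: 'a and N D :: "'a poly"
  assumes "prime p" "p > 3"
    and "unram_padic_field p v"
    and "prime l" "l > 2" "l \<noteq> p"
    and "pint v a4" "pint v a6" "pint v a4'" "pint v a6'"
    and "wdisc a4 a6 \<noteq> 0" "v (wdisc a4 a6) = 0"
    and "wdisc a4' a6' \<noteq> 0" "v (wdisc a4' a6') = 0"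
    and "normalized_isogeny a4 a6 a4' a6' l N D"
    and "pint_poly v N" "pint_poly v D" "red_coprime v N D"
    and "int \<mu> > int (Loss p l)"
  shows "\<forall>b4 b6 b4' b6' :: 'a.
           pint v b4 \<and> pint v b6 \<and> pint v b4' \<and> pint v b6' \<and>
           pdiv v (int \<mu>) (b4 - a4) \<and> pdiv v (int \<mu>) (b6 - a6) \<and>
           pdiv v (int \<mu>) (b4' - a4') \<and> pdiv v (int \<mu>) (b6' - a6') \<longrightarrow>
             (\<forall>st \<in> newton_states (4 * l) 0 1 (Gser b4 b6) (Hpol b4' b6'). state_pint v st) \<and>
             (\<forall>n. pdiv v (int \<mu> - int (Loss p l))
                    (newton_result (4 * l) 0 1 (Gser b4 b6) (Hpol b4' b6') $ n
                     - newton_result (4 * l) 0 1 (Gser a4 a6) (Hpol a4' a6') $ n))"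
proof (intro allI impI)
  interpret padic_valuation p v
    using assms(1-3) prime_odd_nat[of p] unfolding unram_padic_field_def by unfold_locales auto
  obtain T where T: "pint_fps v T" "Gser a4 a6 * pcomp_fps (Hpol a4' a6') T = (fps_deriv T) ^ 2"
    "T $ 0 = 0" "T $ 1 = 1"
    using normalized_isogeny_ode_solution[OF assms(15) _ assms(16,17)] assms(5) by auto
  fix b4 b6 b4' b6' :: 'a
  assume b: "pint v b4 \<and> pint v b6 \<and> pint v b4' \<and> pint v b6' \<and>
    pdiv v (int \<mu>) (b4 - a4) \<and> pdiv v (int \<mu>) (b6 - a6) \<and>
    pdiv v (int \<mu>) (b4' - a4') \<and> pdiv v (int \<mu>) (b6' - a6')"
  then have "fps_cong (int \<mu>) (Gser a4 a6) (Gser b4 b6)"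
    and "\<And>i. pdiv v (int \<mu>) (coeff (Hpol a4' a6') i - coeff (Hpol b4' b6') i)"
    using assms(7-10) by (simp_all add: fps_cong_Gser pdiv_coeff_Hpol_diff pdiv_diff_commute)
  moreover have lin: "Gser c4 c6 $ 1 + poly (pderiv (Hpol d4 d6)) 0 = 0" for c4 c6 d4 d6 :: 'a
    using Gser_nth_1[of c4 c6] poly_pderiv_Hpol_0[of d4 d6] by simp
  ultimately show "(\<forall>st \<in> newton_states (4 * l) 0 1 (Gser b4 b6) (Hpol b4' b6'). state_pint v st) \<and>
    (\<forall>n. pdiv v (int \<mu> - int (Loss p l))
       (newton_result (4 * l) 0 1 (Gser b4 b6) (Hpol b4' b6') $ n
        - newton_result (4 * l) 0 1 (Gser a4 a6) (Hpol a4' a6') $ n))"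
    using assms(7-10,19) b
    by (intro newton_result_precision[where m = "4 * l", OF Gser_nth_0 poly_Hpol_0 lin Gser_nth_0
        poly_Hpol_0 lin T _ pint_poly_Hpol pint_poly_Hpol _ multiplicity_le_LpLoss[where l = l]
        sum_LpLoss_le_Loss[where l = l]]) auto
qed


end
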